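(* In the process algebra $\mathcal{G}$ described in the context, for all $\mathbb{P}_u,\mathbb{P}_v,\mathbb{P},\mathbb{Q}$ (as defined in the context) and all $W\in\mathcal{W}$: (1) $D\simeq D\|G_u\mathbb{P}_u\simeq D\|G_v'\mathbb{P}_v\mathbb{P}_u\simeq D\|Z\mathbb{P}_v\mathbb{P}_u\simeq D\|\mathbb{P}_v\mathbb{P}_u\simeq D\|W\mathbb{P}_v\mathbb{P}_u$; (2) $C\simeq C\|G\mathbb{P}\simeq C\|\mathbb{P}\simeq C\|W\mathbb{P}\simeq C\|G_v\mathbb{P}_v$; (3) $C'\simeq C'\|G'\mathbb{Q}\simeq C'\|G_v\mathbb{Q}\simeq C'\|Z\mathbb{Q}\simeq C'\|\mathbb{Q}$.
   Context: Process algebras: a triple $(\mathcal{C},\mathcal{A},\Delta)$ of finitely many constants, actions (including silent $\tau$) and rules $X\stackrel{\ell}{\longrightarrow}P$. Processes: $P::=\epsilon\mid X\mid PP'\mid P\|P'$, sequential composition associative, parallel composition associative and commutative, $\epsilon$ a unit for both. Semantics: rules of $\Delta$; if $P\stackrel{\ell}{\longrightarrow}P'$ then $PQ\stackrel{\ell}{\longrightarrow}P'Q$, $P\|Q\stackrel{\ell}{\longrightarrow}P'\|Q$, $Q\|P\stackrel{\ell}{\longrightarrow}Q\|P'$. $\Longrightarrow$ is the reflexive transitive closure of $\stackrel{\tau}{\longrightarrow}$. Branching bisimilarity $\simeq$ is the largest relation $\mathcal{B}$ such that whenever $P\mathcal{B}Q$ and $P\stackrel{\ell}{\longrightarrow}P'$,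 either $Q\Longrightarrow Q''\stackrel{\ell}{\longrightarrow}Q'$ with $P\mathcal{B}Q''$ and $P'\mathcal{B}Q'$, or $\ell=\tau$ and $P'\mathcal{B}Q$; and symmetrically. The algebra $\mathcal{G}$: fix a finite alphabet $\Sigma$ with $|\Sigma|\ge2$ and a Post Correspondence instance $\mathrm{INST}=\{(u_1,v_1),\dots,(u_n,v_n)\}$ with $u_k,v_k\in\Sigma^{+}$; let $\mathcal{N}=\{1,\dots,n\}$. Actions: $\{\lambda_U,\lambda_V,\lambda_D,\lambda_I,\lambda_S,\lambda_Z\}\cup\mathcal{N}\cup\Sigma\cup\{\tau\}$. Constants: $X,Y,Z,I,S,C,C',D,G,G',G_u,G_v,G_v'$, $U_k,V_k$ ($k\in\mathcal{N}$), and $W(\omega,k),W(\omega,0)$ for $k\in\mathcal{N}$ and $\omega$ a (possibly empty) suffix of $u_k$ or of $v_k$; $\mathcal{W}$ is the set of these $W$-constants. Rules (with $k$ ranging over $\mathcal{N}$, $a$ over $\Sigma$, $W$ over $\mathcal{W}$): $X\stackrel{\lambda_U}{\longrightarrow}D\|G_v$, $X\stackrel{\tau}{\longrightarrow}D$, $Y\stackrel{\tau}{\longrightarrow}D$, $D\stackrel{\tau}{\longrightarrow}D\|G_u$, $D\stackrel{\lambda_D}{\longrightarrow}C$; $G_u\stackrel{\tau}{\longrightarrow}G_uU_k$, $G_u\stackrel{\lambda_U}{\longrightarrow}G_vU_k$, $G_u\stackrel{\tau}{\longrightarrow}G_v'$, $G_v'\stackrel{\tau}{\longrightarrow}G_v'V_k$,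 $G_v'\stackrel{\tau}{\longrightarrow}Z$; $G_v\stackrel{\tau}{\longrightarrow}G_vV_k$, $G_v\stackrel{\tau}{\longrightarrow}\epsilon$, $G_v\stackrel{\lambda_V}{\longrightarrow}Z$, $Z\stackrel{\tau}{\longrightarrow}\epsilon$, $Z\stackrel{\lambda_Z}{\longrightarrow}\epsilon$; $C\stackrel{\lambda_I}{\longrightarrow}I$, $C\stackrel{\lambda_S}{\longrightarrow}S$, $C\stackrel{\tau}{\longrightarrow}C\|G$, $C\stackrel{\tau}{\longrightarrow}C\|G_v$; $G\stackrel{\tau}{\longrightarrow}GU_k$, $G\stackrel{\tau}{\longrightarrow}GV_k$, $G\stackrel{\tau}{\longrightarrow}\epsilon$; $I\stackrel{\lambda_I}{\longrightarrow}C'$, $I\stackrel{k}{\longrightarrow}I$, $S\stackrel{\lambda_S}{\longrightarrow}C'$, $S\stackrel{a}{\longrightarrow}S$, $C'\stackrel{\tau}{\longrightarrow}C'\|G'$, $C'\stackrel{\tau}{\longrightarrow}\epsilon$; $G'\stackrel{\tau}{\longrightarrow}G'U_k$, $G'\stackrel{\tau}{\longrightarrow}G'V_k$, $G'\stackrel{\tau}{\longrightarrow}G'W$, $G'\stackrel{\tau}{\longrightarrow}G_v$, $G'\stackrel{\tau}{\longrightarrow}Z$; $U_k\stackrel{\tau}{\longrightarrow}W(u_k,k)$, $V_k\stackrel{\tau}{\longrightarrow}W(v_k,k)$; $W(a\omega,k)\stackrel{a}{\longrightarrow}W(\omega,k)$, $W(a\omega,0)\stackrel{a}{\longrightarrow}W(\omega,0)$,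 $W(\omega,k)\stackrel{k}{\longrightarrow}W(\omega,0)$, $W(a\omega,k)\stackrel{\tau}{\longrightarrow}W(\omega,k)$, $W(a\omega,0)\stackrel{\tau}{\longrightarrow}W(\omega,0)$, $W(\omega,k)\stackrel{\tau}{\longrightarrow}W(\omega,0)$, $W(\epsilon,0)\stackrel{\tau}{\longrightarrow}\epsilon$. Notation: $\mathbb{P}_u$ (resp. $\mathbb{P}_v$) denotes a sequential composition (possibly empty, i.e. $\epsilon$) of constants from $\{U_k:k\in\mathcal{N}\}$ (resp. $\{V_k:k\in\mathcal{N}\}$); $\mathbb{P}$ (resp. $\mathbb{Q}$) denotes a sequential composition (possibly empty) of constants from $\{U_k,V_k:k\in\mathcal{N}\}$ (resp. $\{U_k,V_k:k\in\mathcal{N}\}\cup\mathcal{W}$). *)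

theory Defs
  imports Main
begin

datatype 'a const =
    cX | cY | cZ | cI | cS | cC | cC' | cD | cG | cG' | cGu | cGv | cGv'
  | cU nat | cV nat | cW "'a list" nat

datatype 'a act = LU | LV | LD | LI | LS | LZ | Num nat | Sym 'a | Tau

datatype 'a proc = Eps | Cst "'a const" | Seq "'a proc" "'a proc" | Par "'a proc" "'a proc"

inductive scong :: "'a proc \<Rightarrow> 'a proc \<Rightarrow> bool" where
  sc_refl: "scong P P"
| sc_sym: "scong P Q \<Longrightarrow> scong Q P"
| sc_trans: "scong P Q \<Longrightarrow> scong Q R \<Longrightarrow> scong P R"
| sc_seq: "scong P P' \<Longrightarrow> scong Q Q' \<Longrightarrow> scong (Seq P Q) (Seq P' Q')"
| sc_par: "scong P P' \<Longrightarrow> scong Q Q' \<Longrightarrow> scong (Par P Q) (Par P' Q')"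
| sc_seq_assoc: "scong (Seq (Seq P Q) R) (Seq P (Seq Q R))"
| sc_par_assoc: "scong (Par (Par P Q) R) (Par P (Par Q R))"
| sc_par_comm: "scong (Par P Q) (Par Q P)"
| sc_seq_eps_l: "scong (Seq Eps P) P"
| sc_seq_eps_r: "scong (Seq P Eps) P"
| sc_par_eps: "scong (Par P Eps) P"

(* PCP instance given as a list [(u_1,v_1),...,(u_n,v_n)] *)
definition idx :: "('a list \<times> 'a list) list \<Rightarrow> nat set" where
  "idx inst = {1..length inst}"

definition uw :: "('a list \<times> 'a list) list \<Rightarrow> nat \<Rightarrow> 'a list" where
  "uw inst k = fst (inst ! (k - 1))"

definition vw :: "('a list \<times> 'a list) list \<Rightarrow> nat \<Rightarrow> 'a list" where
  "vw inst k = snd (inst ! (k - 1))"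

definition is_suffix :: "'a list \<Rightarrow> 'a list \<Rightarrow> bool" where
  "is_suffix w x \<longleftrightarrow> (\<exists>p. p @ w = x)"

definition Wset :: "('a list \<times> 'a list) list \<Rightarrow> 'a const set" where
  "Wset inst =
     {cW w k | w k. k \<in> idx inst \<and> (is_suffix w (uw inst k) \<or> is_suffix w (vw inst k))}
   \<union> {cW w 0 | w. \<exists>k \<in> idx inst. is_suffix w (uw inst k) \<or> is_suffix w (vw inst k)}"

definition Uset :: "('a list \<times> 'a list) list \<Rightarrow> 'a const set" where
  "Uset inst = {cU k | k. k \<in> idx inst}"

definition Vset :: "('a list \<times> 'a list) list \<Rightarrow> 'a const set" where
  "Vset inst = {cV k | k. k \<in> idx inst}"

inductive rule :: "'a set \<Rightarrow> ('a list \<times> 'a list) list \<Rightarrow> 'a const \<Rightarrow> 'a act \<Rightarrow> 'a proc \<Rightarrow> bool"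
  for Sig inst where
  r1: "rule Sig inst cX LU (Par (Cst cD) (Cst cGv))"
| r2: "rule Sig inst cX Tau (Cst cD)"
| r3: "rule Sig inst cY Tau (Cst cD)"
| r4: "rule Sig inst cD Tau (Par (Cst cD) (Cst cGu))"
| r5: "rule Sig inst cD LD (Cst cC)"
| r6: "k \<in> idx inst \<Longrightarrow> rule Sig inst cGu Tau (Seq (Cst cGu) (Cst (cU k)))"
| r7: "k \<in> idx inst \<Longrightarrow> rule Sig inst cGu LU (Seq (Cst cGv) (Cst (cU k)))"
| r8: "rule Sig inst cGu Tau (Cst cGv')"
| r9: "k \<in> idx inst \<Longrightarrow> rule Sig inst cGv' Tau (Seq (Cst cGv') (Cst (cV k)))"
| r10: "rule Sig inst cGv' Tau (Cst cZ)"
| r11: "k \<in> idx inst \<Longrightarrow> rule Sig inst cGv Tau (Seq (Cst cGv) (Cst (cV k)))"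
| r12: "rule Sig inst cGv Tau Eps"
| r13: "rule Sig inst cGv LV (Cst cZ)"
| r14: "rule Sig inst cZ Tau Eps"
| r15: "rule Sig inst cZ LZ Eps"
| r16: "rule Sig inst cC LI (Cst cI)"
| r17: "rule Sig inst cC LS (Cst cS)"
| r18: "rule Sig inst cC Tau (Par (Cst cC) (Cst cG))"
| r19: "rule Sig inst cC Tau (Par (Cst cC) (Cst cGv))"
| r20: "k \<in> idx inst \<Longrightarrow> rule Sig inst cG Tau (Seq (Cst cG) (Cst (cU k)))"
| r21: "k \<in> idx inst \<Longrightarrow> rule Sig inst cG Tau (Seq (Cst cG) (Cst (cV k)))"
| r22: "rule Sig inst cG Tau Eps"
| r23: "rule Sig inst cI LI (Cst cC')"
| r24: "k \<in> idx inst \<Longrightarrow> rule Sig inst cI (Num k) (Cst cI)"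
| r25: "rule Sig inst cS LS (Cst cC')"
| r26: "a \<in> Sig \<Longrightarrow> rule Sig inst cS (Sym a) (Cst cS)"
| r27: "rule Sig inst cC' Tau (Par (Cst cC') (Cst cG'))"
| r28: "rule Sig inst cC' Tau Eps"
| r29: "k \<in> idx inst \<Longrightarrow> rule Sig inst cG' Tau (Seq (Cst cG') (Cst (cU k)))"
| r30: "k \<in> idx inst \<Longrightarrow> rule Sig inst cG' Tau (Seq (Cst cG') (Cst (cV k)))"
| r31: "W \<in> Wset inst \<Longrightarrow> rule Sig inst cG' Tau (Seq (Cst cG') (Cst W))"
| r32: "rule Sig inst cG' Tau (Cst cGv)"
| r33: "rule Sig inst cG' Tau (Cst cZ)"
| r34: "k \<in> idx inst \<Longrightarrow> rule Sig inst (cU k) Tau (Cst (cW (uw inst k) k))"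
| r35: "k \<in> idx inst \<Longrightarrow> rule Sig inst (cV k) Tau (Cst (cW (vw inst k) k))"
| r36: "k \<in> idx inst \<Longrightarrow> cW (a # w) k \<in> Wset inst \<Longrightarrow> a \<in> Sig \<Longrightarrow>
         rule Sig inst (cW (a # w) k) (Sym a) (Cst (cW w k))"
| r37: "cW (a # w) 0 \<in> Wset inst \<Longrightarrow> a \<in> Sig \<Longrightarrow>
         rule Sig inst (cW (a # w) 0) (Sym a) (Cst (cW w 0))"
| r38: "k \<in> idx inst \<Longrightarrow> cW w k \<in> Wset inst \<Longrightarrow>
         rule Sig inst (cW w k) (Num k) (Cst (cW w 0))"
| r39: "k \<in> idx inst \<Longrightarrow> cW (a # w) k \<in> Wset inst \<Longrightarrow> a \<in> Sig \<Longrightarrow>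
         rule Sig inst (cW (a # w) k) Tau (Cst (cW w k))"
| r40: "cW (a # w) 0 \<in> Wset inst \<Longrightarrow> a \<in> Sig \<Longrightarrow>
         rule Sig inst (cW (a # w) 0) Tau (Cst (cW w 0))"
| r41: "k \<in> idx inst \<Longrightarrow> cW w k \<in> Wset inst \<Longrightarrow>
         rule Sig inst (cW w k) Tau (Cst (cW w 0))"
| r42: "cW [] 0 \<in> Wset inst \<Longrightarrow> rule Sig inst (cW [] 0) Tau Eps"

inductive step :: "'a set \<Rightarrow> ('a list \<times> 'a list) list \<Rightarrow> 'a proc \<Rightarrow> 'a act \<Rightarrow> 'a proc \<Rightarrow> bool"
  for Sig inst where
  st_rule: "rule Sig inst c l P \<Longrightarrow> step Sig inst (Cst c) l P"
| st_seq: "step Sig inst P l P' \<Longrightarrow> step Sig inst (Seq P Q) l (Seq P' Q)"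
| st_parl: "step Sig inst P l P' \<Longrightarrow> step Sig inst (Par P Q) l (Par P' Q)"
| st_parr: "step Sig inst P l P' \<Longrightarrow> step Sig inst (Par Q P) l (Par Q P')"
| st_cong: "scong P P1 \<Longrightarrow> step Sig inst P1 l P1' \<Longrightarrow> scong P1' P' \<Longrightarrow> step Sig inst P l P'"

definition tau_steps :: "'a set \<Rightarrow> ('a list \<times> 'a list) list \<Rightarrow> 'a proc \<Rightarrow> 'a proc \<Rightarrow> bool" where
  "tau_steps Sig inst = (\<lambda>P Q. step Sig inst P Tau Q)\<^sup>*\<^sup>*"

definition bb_sim :: "'a set \<Rightarrow> ('a list \<times> 'a list) list \<Rightarrow> ('a proc \<Rightarrow> 'a proc \<Rightarrow> bool) \<Rightarrow> bool" where
  "bb_sim Sig inst B \<longleftrightarrow>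
     (\<forall>P Q l P'. B P Q \<and> step Sig inst P l P' \<longrightarrow>
        (\<exists>Q'' Q'. tau_steps Sig inst Q Q'' \<and> step Sig inst Q'' l Q' \<and> B P Q'' \<and> B P' Q')
        \<or> (l = Tau \<and> B P' Q))"

definition branching_bisim :: "'a set \<Rightarrow> ('a list \<times> 'a list) list \<Rightarrow> ('a proc \<Rightarrow> 'a proc \<Rightarrow> bool) \<Rightarrow> bool" where
  "branching_bisim Sig inst B \<longleftrightarrow> bb_sim Sig inst B \<and> bb_sim Sig inst (\<lambda>P Q. B Q P)"

definition bbisimilar :: "'a set \<Rightarrow> ('a list \<times> 'a list) list \<Rightarrow> 'a proc \<Rightarrow> 'a proc \<Rightarrow> bool" where
  "bbisimilar Sig inst P Q \<longleftrightarrow> (\<exists>B. branching_bisim Sig inst B \<and> B P Q)"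

fun seqs :: "'a const list \<Rightarrow> 'a proc" where
  "seqs [] = Eps"
| "seqs (c # cs) = Seq (Cst c) (seqs cs)"

end

theory Submission
  imports Defs "HOL-Library.Multiset"
begin

text \<open>Processes are read modulo structural congruence as multisets of sequential chains of
  constants; a transition rewrites the head of one chain. All thirteen bisimilarities are
  witnessed by a single relation on such normal forms. Two configurations are related if they
  reach each other by silent steps: this covers \<open>C\<close> and \<open>C'\<close>, which regenerate every chain
  in question silently through \<open>G\<close>, \<open>G\<^sub>v\<close> or \<open>G'\<close>, while every such chain vanishes
  silently. Or they are related if both consist of \<open>D\<close>, a common part and chains that \<open>D\<close> can
  spawn: a visible move of a spawned chain on one side is answered by letting \<open>D\<close> spawn a copy
  on the other side first, and the move \<open>D \<rightarrow> C\<close> is answered after spawning the chains that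
  \<open>C\<close> could not regenerate and letting the others vanish.\<close>

section \<open>Normal forms of processes\<close>

definition chain_mset :: "'x list \<Rightarrow> 'x list multiset" where
  "chain_mset xs = (if xs = [] then {#} else {#xs#})"

fun nf_seq :: "'x list multiset option \<Rightarrow> 'x list multiset option \<Rightarrow> 'x list multiset option" where
  "nf_seq (Some A) (Some B) =
     (if A = {#} then Some B else if B = {#} then Some A
      else if (\<exists>a. A = {#a#}) \<and> (\<exists>b. B = {#b#})
      then Some {#the_elem (set_mset A) @ the_elem (set_mset B)#} else None)"
| "nf_seq _ _ = None"

fun nf_par :: "'x multiset option \<Rightarrow> 'x multiset option \<Rightarrow> 'x multiset option" where
  "nf_par (Some A) (Some B) = Some (A + B)"
| "nf_par _ _ = None"

text \<open>\<open>nf P\<close> is the multiset of the maximal sequential chains of constants of \<open>P\<close>. It is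
  \<open>None\<close> when a sequential composition has a genuinely parallel operand; no such process occurs
  in the statements below, and none is reachable from one.\<close>

fun nf :: "'a proc \<Rightarrow> 'a const list multiset option" where
  "nf Eps = Some {#}"
| "nf (Cst c) = Some {#[c]#}"
| "nf (Seq P Q) = nf_seq (nf P) (nf Q)"
| "nf (Par P Q) = nf_par (nf P) (nf Q)"

lemma nf_seq_SomeE:
  "nf_seq (Some A) (Some B) = Some M \<Longrightarrow>
   (A = {#} \<and> M = B) \<or> (A \<noteq> {#} \<and> B = {#} \<and> M = A) \<or> (\<exists>a b. A = {#a#} \<and> B = {#b#} \<and> M = {#a @ b#})"
  by (auto split: if_splits)

lemma nf_seq_empty_left [simp]: "nf_seq (Some {#}) X = X"
  by (cases X) auto

lemma nf_seq_empty_right [simp]: "nf_seq X (Some {#}) = X"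
  by (cases X) auto

lemma nf_seq_None_right [simp]: "nf_seq X None = None"
  by (cases X) auto

lemma nf_seq_singletons [simp]: "nf_seq (Some {#a#}) (Some {#b#}) = Some {#a @ b#}"
  by simp

lemma nf_seq_assoc: "nf_seq (nf_seq A B) C = nf_seq A (nf_seq B C)"
  by (cases A; cases B; cases C) auto

declare nf_seq.simps(1) [simp del]

lemma nf_par_empty_left [simp]: "nf_par (Some {#}) X = X"
  by (cases X) auto

lemma nf_par_empty_right [simp]: "nf_par X (Some {#}) = X"
  by (cases X) auto

lemma nf_par_None_right [simp]: "nf_par X None = None"
  by (cases X) auto

lemma nf_par_commute: "nf_par A B = nf_par B A"
  by (cases A; cases B) (auto simp: add.commute)

lemma nf_par_assoc: "nf_par (nf_par A B) C = nf_par A (nf_par B C)"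
  by (cases A; cases B; cases C) (auto simp: add.assoc)

lemma nf_par_Some_left: "nf_par (Some A) (nf_par (Some B) X) = nf_par (Some (A + B)) X"
  by (cases X) auto

lemma nf_par_Some_right: "nf_par (nf_par (Some B) X) (Some A) = nf_par (Some (B + A)) X"
  by (cases X) (auto simp: add_ac)

lemma chain_mset_eq_single [simp]:
  "chain_mset r = {#x#} \<longleftrightarrow> r = x \<and> x \<noteq> []"
  "{#x#} = chain_mset r \<longleftrightarrow> r = x \<and> x \<noteq> []"
  by (auto simp: chain_mset_def)

lemma chain_mset_eq_empty [simp]: "chain_mset r = {#} \<longleftrightarrow> r = []" "{#} = chain_mset r \<longleftrightarrow> r = []"
  by (auto simp: chain_mset_def)

lemma chain_mset_Cons [simp]: "chain_mset (c # xs) = {#c # xs#}"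
  by (simp add: chain_mset_def)

lemma nf_seq_chain_mset: "nf_seq (Some (chain_mset r)) (Some (chain_mset xs)) = Some (chain_mset (r @ xs))"
  by (auto simp: chain_mset_def)

lemma nf_seq_chain_mset_single:
  "b \<noteq> [] \<Longrightarrow> nf_seq (Some (chain_mset xs)) (Some {#b#}) = Some (chain_mset (xs @ b))"
  by (auto simp: chain_mset_def)

lemma nf_seq_Cst_chain_mset [simp]: "nf_seq (Some {#[c]#}) (Some (chain_mset xs)) = Some {#c # xs#}"
  by (cases "xs = []") (auto simp: chain_mset_def)

lemma nf_seqs: "nf (seqs xs) = Some (chain_mset xs)"
  by (induction xs) auto

lemma scong_nf_eq: "scong P Q \<Longrightarrow> nf P = nf Q"
proof (induction rule: scong.induct)
  case (sc_par_comm P Q)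
  then show ?case by (simp add: nf_par_commute)
qed (simp_all add: nf_seq_assoc nf_par_assoc)

lemma nf_no_empty_chain: "nf P = Some M \<Longrightarrow> [] \<notin># M"
proof (induction P arbitrary: M)
  case (Seq P Q)
  then show ?case by (cases "nf P"; cases "nf Q") (auto dest!: nf_seq_SomeE)
next
  case (Par P Q)
  then show ?case by (cases "nf P"; cases "nf Q") auto
qed auto

lemma nf_empty_scong_Eps: "nf P = Some {#} \<Longrightarrow> scong P Eps"
proof (induction P)
  case (Seq P Q)
  then have "nf P = Some {#}" "nf Q = Some {#}"
    by (cases "nf P"; cases "nf Q"; auto dest!: nf_seq_SomeE)+
  with Seq show ?case by (simp add: sc_trans[OF sc_seq sc_seq_eps_l])
next
  case (Par P Q)
  then have "nf P = Some {#}" "nf Q = Some {#}"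
    by (cases "nf P"; cases "nf Q"; auto)+
  with Par show ?case by (simp add: sc_trans[OF sc_par sc_par_eps])
qed (auto intro: sc_refl)

definition nf_step ::
  "'a set \<Rightarrow> ('a list \<times> 'a list) list \<Rightarrow> 'a const list multiset \<Rightarrow> 'a act \<Rightarrow> 'a const list multiset \<Rightarrow> bool"
where
  "nf_step Sig inst M l M' \<longleftrightarrow> (\<exists>c xs M0 R. M = add_mset (c # xs) M0 \<and> rule Sig inst c l R \<and>
      nf_par (Some M0) (nf_seq (nf R) (Some (chain_mset xs))) = Some M')"

abbreviation nf_reach where
  "nf_reach Sig inst \<equiv> (\<lambda>M M'. nf_step Sig inst M Tau M')\<^sup>*\<^sup>*"

lemma step_nf_cases:
  "step Sig inst P l P' \<Longrightarrow> nf P = Some M \<Longrightarrow>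
   \<exists>c xs M0 R. M = add_mset (c # xs) M0 \<and> rule Sig inst c l R \<and>
     nf P' = nf_par (Some M0) (nf_seq (nf R) (Some (chain_mset xs)))"
proof (induction arbitrary: M rule: step.induct)
  case (st_rule c l P)
  then show ?case by (intro exI[of _ c] exI[of _ "[]"]) (auto simp: chain_mset_def)
next
  case (st_seq P l P' Q)
  obtain A B where A: "nf P = Some A" and B: "nf Q = Some B"
    using st_seq.prems by (cases "nf P"; cases "nf Q") auto
  from st_seq.IH[OF A] obtain c xs M0 R where h: "A = add_mset (c # xs) M0" "rule Sig inst c l R"
    "nf P' = nf_par (Some M0) (nf_seq (nf R) (Some (chain_mset xs)))"
    by blast
  show ?case
  proof (cases "B = {#}")
    case True
    then show ?thesis using st_seq.prems A B h by auto
  next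
    case False
    then obtain b where b: "B = {#b#}" and M0: "M0 = {#}"
      using st_seq.prems A B h(1) by (auto dest!: nf_seq_SomeE)
    have "b \<noteq> []" using nf_no_empty_chain[OF B] b by auto
    then show ?thesis using st_seq.prems A B h b M0
      by (intro exI[of _ c] exI[of _ "xs @ b"] exI[of _ "{#}"] exI[of _ R])
         (auto simp: nf_seq_assoc nf_seq_chain_mset_single simp del: nf_seq.simps)
  qed
next
  case (st_parl P l P' Q)
  obtain A B where A: "nf P = Some A" and B: "nf Q = Some B"
    using st_parl.prems by (cases "nf P"; cases "nf Q") auto
  from st_parl.IH[OF A] obtain c xs M0 R where h: "A = add_mset (c # xs) M0" "rule Sig inst c l R"
    "nf P' = nf_par (Some M0) (nf_seq (nf R) (Some (chain_mset xs)))"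
    by blast
  show ?case using st_parl.prems A B h
    by (intro exI[of _ c] exI[of _ xs] exI[of _ "M0 + B"] exI[of _ R])
       (auto simp: nf_par_Some_left nf_par_Some_right add_ac)
next
  case (st_parr P l P' Q)
  obtain A B where A: "nf P = Some A" and B: "nf Q = Some B"
    using st_parr.prems by (cases "nf P"; cases "nf Q") auto
  from st_parr.IH[OF A] obtain c xs M0 R where h: "A = add_mset (c # xs) M0" "rule Sig inst c l R"
    "nf P' = nf_par (Some M0) (nf_seq (nf R) (Some (chain_mset xs)))"
    by blast
  show ?case using st_parr.prems A B h
    by (intro exI[of _ c] exI[of _ xs] exI[of _ "B + M0"] exI[of _ R])
       (auto simp: nf_par_Some_left nf_par_Some_right add_ac)
next
  case (st_cong P P1 l P1' P')
  then show ?case using scong_nf_eq by metis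
qed

lemma nf_rule_step:
  "nf P = Some (add_mset (c # xs) M0) \<Longrightarrow> rule Sig inst c l R \<Longrightarrow>
   \<exists>P'. step Sig inst P l P' \<and> nf P' = nf_par (Some M0) (nf_seq (nf R) (Some (chain_mset xs)))"
proof (induction P arbitrary: M0 xs)
  case Eps
  then show ?case by simp
next
  case (Cst c')
  then show ?case by (auto intro!: st_rule simp: chain_mset_def)
next
  case (Par P Q)
  obtain A B where A: "nf P = Some A" and B: "nf Q = Some B"
    using Par.prems by (cases "nf P"; cases "nf Q") auto
  have AB: "A + B = add_mset (c # xs) M0" using Par.prems A B by simp
  show ?case
  proof (cases "c # xs \<in># A")
    case True
    then obtain A0 where A0: "A = add_mset (c # xs) A0" by (metis mset_add)
    from Par.IH(1)[OF _ Par.prems(2), of xs A0] A A0 obtain P' where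
      "step Sig inst P l P'" "nf P' = nf_par (Some A0) (nf_seq (nf R) (Some (chain_mset xs)))"
      by auto
    moreover have "M0 = A0 + B" using AB A0 by simp
    ultimately show ?thesis using B
      by (intro exI[of _ "Par P' Q"]) (auto intro: st_parl simp: nf_par_Some_left nf_par_Some_right add_ac)
  next
    case False
    then have "c # xs \<in># B" using AB by (metis add_mset_add_single union_iff union_single_eq_member)
    then obtain B0 where B0: "B = add_mset (c # xs) B0" by (metis mset_add)
    from Par.IH(2)[OF _ Par.prems(2), of xs B0] B B0 obtain Q' where
      "step Sig inst Q l Q'" "nf Q' = nf_par (Some B0) (nf_seq (nf R) (Some (chain_mset xs)))"
      by auto
    moreover have "M0 = A + B0" using AB B0 by simp
    ultimately show ?thesis using A
      by (intro exI[of _ "Par P Q'"]) (auto intro: st_parr simp: nf_par_Some_left nf_par_Some_right add_ac)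
  qed
next
  case (Seq P Q)
  obtain A B where A: "nf P = Some A" and B: "nf Q = Some B"
    using Seq.prems by (cases "nf P"; cases "nf Q") auto
  consider "A = {#}" | "A \<noteq> {#}" "B = {#}" | a b where "A = {#a#}" "B = {#b#}"
    using Seq.prems A B by (auto dest!: nf_seq_SomeE)
  then show ?case
  proof cases
    case 1
    then have "scong (Seq P Q) Q"
      using nf_empty_scong_Eps A by (meson sc_refl sc_seq sc_seq_eps_l sc_trans)
    moreover from Seq.IH(2)[OF _ Seq.prems(2), of xs M0] Seq.prems A B 1 obtain Q' where
      "step Sig inst Q l Q'" "nf Q' = nf_par (Some M0) (nf_seq (nf R) (Some (chain_mset xs)))"
      by auto
    ultimately show ?thesis by (meson sc_refl st_cong)
  next
    case 2
    from Seq.IH(1)[OF _ Seq.prems(2), of xs M0] Seq.prems A B 2 obtain P' where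
      "step Sig inst P l P'" "nf P' = nf_par (Some M0) (nf_seq (nf R) (Some (chain_mset xs)))"
      by auto
    then show ?thesis using B 2 by (intro exI[of _ "Seq P' Q"]) (auto intro: st_seq)
  next
    case (3 a b)
    then have ab: "a @ b = c # xs" "M0 = {#}" using Seq.prems A B by auto
    have "a \<noteq> []" "b \<noteq> []" using nf_no_empty_chain[OF A] nf_no_empty_chain[OF B] 3 by auto
    then obtain xs1 where a: "a = c # xs1" "xs = xs1 @ b" using ab by (cases a) auto
    from Seq.IH(1)[OF _ Seq.prems(2), of xs1 "{#}"] A 3 a obtain P' where
      "step Sig inst P l P'" "nf P' = nf_seq (nf R) (Some (chain_mset xs1))"
      by auto
    then show ?thesis using B 3 a ab \<open>b \<noteq> []\<close>
      by (intro exI[of _ "Seq P' Q"])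
         (auto intro: st_seq simp: nf_seq_assoc nf_seq_chain_mset_single simp del: nf_seq.simps)
  qed
qed

lemma nf_step_step:
  "nf_step Sig inst M l M' \<Longrightarrow> nf P = Some M \<Longrightarrow> \<exists>P'. step Sig inst P l P' \<and> nf P' = Some M'"
  unfolding nf_step_def using nf_rule_step by metis

lemma nf_reach_tau_steps:
  "nf_reach Sig inst M M' \<Longrightarrow> nf P = Some M \<Longrightarrow> \<exists>P'. tau_steps Sig inst P P' \<and> nf P' = Some M'"
proof (induction rule: rtranclp_induct)
  case base
  then show ?case by (auto simp: tau_steps_def)
next
  case (step M1 M2)
  then obtain P1 where "tau_steps Sig inst P P1" "nf P1 = Some M1" by blast
  moreover obtain P2 where "step Sig inst P1 Tau P2" "nf P2 = Some M2"
    using nf_step_step[OF step(2) \<open>nf P1 = Some M1\<close>] by blast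
  ultimately show ?case by (auto simp: tau_steps_def intro: rtranclp.rtrancl_into_rtrancl)
qed

text \<open>The constants with a rule producing a parallel composition, together with those from
  which such constants are reachable; they may only occur at the end of a chain, which keeps
  normal forms defined along transitions.\<close>

definition ctrl_const :: "'a const \<Rightarrow> bool" where
  "ctrl_const c \<longleftrightarrow> c \<in> {cX, cY, cD, cC, cC', cI, cS}"

definition ctrl_final :: "'a const list multiset \<Rightarrow> bool" where
  "ctrl_final M \<longleftrightarrow> (\<forall>x\<in>#M. \<forall>c\<in>set (butlast x). \<not> ctrl_const c)"

lemma ctrl_final_add [simp]: "ctrl_final (M + N) \<longleftrightarrow> ctrl_final M \<and> ctrl_final N"
  by (auto simp: ctrl_final_def)

lemma ctrl_final_add_mset [simp]:
  "ctrl_final (add_mset x M) \<longleftrightarrow> (\<forall>c\<in>set (butlast x). \<not> ctrl_const c) \<and> ctrl_final M"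
  by (auto simp: ctrl_final_def)

lemma ctrl_final_empty [simp]: "ctrl_final {#}"
  by (auto simp: ctrl_final_def)

lemma Wset_cW: "W \<in> Wset inst \<Longrightarrow> \<exists>w k. W = cW w k"
  by (auto simp: Wset_def)

lemma rule_nf_cases:
  "rule Sig inst c l R \<Longrightarrow>
   (\<not> ctrl_const c \<and> (\<exists>r. nf R = Some (chain_mset r) \<and> (\<forall>d\<in>set r. \<not> ctrl_const d))) \<or>
   (ctrl_const c \<and> (\<exists>Y. nf R = Some Y \<and> ctrl_final Y))"
proof (induction rule: rule.induct)
  case r12
  then show ?case by (auto intro: exI[of _ "[]"])
next
  case r14
  then show ?case by (auto intro: exI[of _ "[]"])
next
  case r15
  then show ?case by (auto intro: exI[of _ "[]"])
next
  case r22
  then show ?case by (auto intro: exI[of _ "[]"])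
next
  case r42
  then show ?case by (auto intro: exI[of _ "[]"])
qed (auto simp: ctrl_const_def ctrl_final_def dest!: Wset_cW)

lemma ctrl_final_rule_successor:
  assumes "ctrl_final (add_mset (c # xs) M0)" and "rule Sig inst c l R"
  shows "\<exists>M'. nf_par (Some M0) (nf_seq (nf R) (Some (chain_mset xs))) = Some M' \<and> ctrl_final M'"
  using rule_nf_cases[OF assms(2)]
proof
  assume "\<not> ctrl_const c \<and> (\<exists>r. nf R = Some (chain_mset r) \<and> (\<forall>d\<in>set r. \<not> ctrl_const d))"
  then obtain r where r: "nf R = Some (chain_mset r)" "\<forall>d\<in>set r. \<not> ctrl_const d" by blast
  have M0: "ctrl_final M0" and cxs: "\<forall>d\<in>set (butlast (c # xs)). \<not> ctrl_const d"
    using assms(1) by auto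
  have "\<forall>d\<in>set (butlast (r @ xs)). \<not> ctrl_const d"
  proof
    fix d assume "d \<in> set (butlast (r @ xs))"
    then have "d \<in> set r \<or> d \<in> set (butlast (c # xs))"
      by (cases "xs = []") (auto simp: butlast_append in_set_butlastD)
    then show "\<not> ctrl_const d" using r cxs by auto
  qed
  then have "ctrl_final (M0 + chain_mset (r @ xs))" using M0 by (auto simp: chain_mset_def)
  moreover have "nf_par (Some M0) (nf_seq (nf R) (Some (chain_mset xs))) = Some (M0 + chain_mset (r @ xs))"
    using r(1) nf_seq_chain_mset[of r xs] by simp
  ultimately show ?thesis by blast
next
  assume "ctrl_const c \<and> (\<exists>Y. nf R = Some Y \<and> ctrl_final Y)"
  then obtain Y where Y: "ctrl_const c" "nf R = Some Y" "ctrl_final Y" by blast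
  then have "xs = []" using assms(1) by (cases xs) auto
  then show ?thesis using Y assms(1) by (auto simp: chain_mset_def)
qed

lemma step_nf_step:
  assumes "step Sig inst P l P'" and "nf P = Some M" and "ctrl_final M"
  shows "\<exists>M'. nf P' = Some M' \<and> nf_step Sig inst M l M' \<and> ctrl_final M'"
proof -
  from step_nf_cases[OF assms(1,2)] obtain c xs M0 R where h: "M = add_mset (c # xs) M0"
    "rule Sig inst c l R" "nf P' = nf_par (Some M0) (nf_seq (nf R) (Some (chain_mset xs)))"
    by blast
  with assms(3) obtain M' where
    "nf_par (Some M0) (nf_seq (nf R) (Some (chain_mset xs))) = Some M'" "ctrl_final M'"
    using ctrl_final_rule_successor by blast
  then show ?thesis using h unfolding nf_step_def by auto
qed

definition nf_match ::
  "'a set \<Rightarrow> ('a list \<times> 'a list) list \<Rightarrow> ('a const list multiset \<Rightarrow> 'a const list multiset \<Rightarrow> bool) \<Rightarrow>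
   'a const list multiset \<Rightarrow> 'a const list multiset \<Rightarrow> 'a act \<Rightarrow> 'a const list multiset \<Rightarrow> bool"
where
  "nf_match Sig inst B M N l M' \<longleftrightarrow> (l = Tau \<and> B M' N) \<or>
     (\<exists>N'' N'. nf_reach Sig inst N N'' \<and> B M N'' \<and> nf_step Sig inst N'' l N' \<and> B M' N')"

lemma bbisimilar_from_nf_relation:
  assumes sym: "\<And>M N. B M N \<Longrightarrow> B N M"
    and ctrl: "\<And>M N. B M N \<Longrightarrow> ctrl_final M"
    and transfer: "\<And>M N l M'. B M N \<Longrightarrow> nf_step Sig inst M l M' \<Longrightarrow> ctrl_final M' \<Longrightarrow>
        nf_match Sig inst B M N l M'"
    and "nf P = Some M" and "nf Q = Some N" and "B M N"
  shows "bbisimilar Sig inst P Q"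
proof -
  define BP where "BP = (\<lambda>P Q. \<exists>M N. nf P = Some M \<and> nf Q = Some N \<and> B M N)"
  have "bb_sim Sig inst BP"
    unfolding bb_sim_def
  proof (intro allI impI)
    fix P Q l P' assume "BP P Q \<and> step Sig inst P l P'"
    then obtain M N M' where MN: "nf P = Some M" "nf Q = Some N" "B M N"
      and M': "nf P' = Some M'" "nf_step Sig inst M l M'" "ctrl_final M'"
      using step_nf_step ctrl unfolding BP_def by metis
    from transfer[OF MN(3) M'(2,3)]
    show "(\<exists>Q'' Q'. tau_steps Sig inst Q Q'' \<and> step Sig inst Q'' l Q' \<and> BP P Q'' \<and> BP P' Q') \<or>
          (l = Tau \<and> BP P' Q)"
      unfolding nf_match_def
    proof
      assume "l = Tau \<and> B M' N"
      then show ?thesis using M' MN by (auto simp: BP_def)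
    next
      assume "\<exists>N'' N'. nf_reach Sig inst N N'' \<and> B M N'' \<and> nf_step Sig inst N'' l N' \<and> B M' N'"
      then obtain N'' N' where
        N: "nf_reach Sig inst N N''" "B M N''" "nf_step Sig inst N'' l N'" "B M' N'"
        by blast
      obtain Q'' where "tau_steps Sig inst Q Q''" "nf Q'' = Some N''"
        using nf_reach_tau_steps[OF N(1) MN(2)] by blast
      moreover obtain Q' where "step Sig inst Q'' l Q'" "nf Q' = Some N'"
        using nf_step_step[OF N(3) \<open>nf Q'' = Some N''\<close>] by blast
      ultimately show ?thesis using N MN M' unfolding BP_def by blast
    qed
  qed
  moreover have "(\<lambda>P Q. BP Q P) = BP"
    unfolding BP_def using sym by (intro ext) blast
  ultimately have "branching_bisim Sig inst BP" by (simp add: branching_bisim_def)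
  then show ?thesis unfolding bbisimilar_def BP_def using assms by blast
qed

lemma nf_step_add_right: "nf_step Sig inst M l M' \<Longrightarrow> nf_step Sig inst (M + X) l (M' + X)"
  unfolding nf_step_def
proof (elim exE conjE)
  fix c xs M0 R
  assume "M = add_mset (c # xs) M0" "rule Sig inst c l R"
    "nf_par (Some M0) (nf_seq (nf R) (Some (chain_mset xs))) = Some M'"
  then show "\<exists>c xs M0 R. M + X = add_mset (c # xs) M0 \<and> rule Sig inst c l R \<and>
      nf_par (Some M0) (nf_seq (nf R) (Some (chain_mset xs))) = Some (M' + X)"
    by (intro exI[of _ c] exI[of _ xs] exI[of _ "M0 + X"] exI[of _ R])
       (cases "nf_seq (nf R) (Some (chain_mset xs))"; auto simp: add_ac)
qed

lemma nf_step_rule: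
  "rule Sig inst c l R \<Longrightarrow> nf_seq (nf R) (Some (chain_mset xs)) = Some Y \<Longrightarrow>
   nf_step Sig inst (add_mset (c # xs) M) l (M + Y)"
  unfolding nf_step_def by (intro exI[of _ c] exI[of _ xs] exI[of _ M] exI[of _ R]) simp

lemma nf_step_rule_singleton:
  "rule Sig inst c l R \<Longrightarrow> nf R = Some Y \<Longrightarrow> nf_step Sig inst (add_mset [c] M) l (M + Y)"
  using nf_step_rule[of Sig inst c l R "[]" Y M] by (simp add: chain_mset_def)

lemma nf_step_unfold:
  "nf_step Sig inst M l M' \<Longrightarrow> \<exists>c xs M0 R Y. M = add_mset (c # xs) M0 \<and> rule Sig inst c l R \<and>
     nf_seq (nf R) (Some (chain_mset xs)) = Some Y \<and> M' = M0 + Y"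
  unfolding nf_step_def
proof (elim exE conjE)
  fix c xs M0 R
  assume "M = add_mset (c # xs) M0" "rule Sig inst c l R"
    "nf_par (Some M0) (nf_seq (nf R) (Some (chain_mset xs))) = Some M'"
  then show ?thesis
    by (cases "nf_seq (nf R) (Some (chain_mset xs))") (simp_all, blast)
qed

section \<open>Silent reductions of a single chain\<close>

definition chain_step :: "'a set \<Rightarrow> ('a list \<times> 'a list) list \<Rightarrow> 'a const list \<Rightarrow> 'a const list \<Rightarrow> bool" where
  "chain_step Sig inst x y \<longleftrightarrow> nf_step Sig inst {#x#} Tau (chain_mset y)"

abbreviation chain_reach where
  "chain_reach Sig inst \<equiv> (chain_step Sig inst)\<^sup>*\<^sup>*"

lemma chain_step_rule:
  assumes "rule Sig inst c Tau R" and "nf R = Some (chain_mset r)"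
  shows "chain_step Sig inst (c # xs) (r @ xs)"
  using nf_step_rule[OF assms(1), of xs "chain_mset (r @ xs)" "{#}"] assms(2)
  by (simp add: chain_step_def nf_seq_chain_mset)

lemma chain_step_rule_Cst: "rule Sig inst c Tau (Cst d) \<Longrightarrow> chain_step Sig inst (c # xs) (d # xs)"
  using chain_step_rule[of Sig inst c "Cst d" "[d]" xs] by simp

lemma chain_step_rule_Eps: "rule Sig inst c Tau Eps \<Longrightarrow> chain_step Sig inst (c # xs) xs"
  using chain_step_rule[of Sig inst c Eps "[]" xs] by simp

lemma chain_step_rule_Seq:
  "rule Sig inst c Tau (Seq (Cst d) (Cst e)) \<Longrightarrow> chain_step Sig inst (c # xs) (d # e # xs)"
  using chain_step_rule[of Sig inst c "Seq (Cst d) (Cst e)" "[d, e]" xs] by simp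

lemma chain_step_append:
  assumes "chain_step Sig inst x y"
  shows "chain_step Sig inst (x @ z) (y @ z)"
proof -
  from assms obtain c xs R where x: "x = c # xs" and r: "rule Sig inst c Tau R"
    and y: "nf_seq (nf R) (Some (chain_mset xs)) = Some (chain_mset y)"
    unfolding chain_step_def by (auto dest!: nf_step_unfold simp: single_eq_add_mset)
  have "nf_seq (nf R) (Some (chain_mset (xs @ z))) = Some (chain_mset (y @ z))"
    using y by (metis nf_seq_assoc nf_seq_chain_mset)
  then show ?thesis
    using nf_step_rule[OF r, of "xs @ z" _ "{#}"] x by (simp add: chain_step_def)
qed

lemma chain_reach_append: "chain_reach Sig inst x y \<Longrightarrow> chain_reach Sig inst (x @ z) (y @ z)"
  by (induction rule: rtranclp_induct) (auto intro: rtranclp.rtrancl_into_rtrancl chain_step_append)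

lemma chain_reach_nf_reach:
  "chain_reach Sig inst x y \<Longrightarrow> nf_reach Sig inst (M + chain_mset x) (M + chain_mset y)"
proof (induction rule: rtranclp_induct)
  case (step y z)
  then have "y \<noteq> []" by (auto simp: chain_step_def nf_step_def)
  then have "nf_step Sig inst (chain_mset y + M) Tau (chain_mset z + M)"
    using nf_step_add_right[of Sig inst "{#y#}" Tau "chain_mset z" M] step(2)
    by (simp add: chain_step_def chain_mset_def)
  then show ?case using step(3) by (simp add: add_ac rtranclp.rtrancl_into_rtrancl)
qed auto

section \<open>The constants \<open>W(\<omega>, k)\<close>\<close>

lemma is_suffix_refl: "is_suffix x x"
  by (auto simp: is_suffix_def)

lemma is_suffix_append: "is_suffix (p @ w) x \<Longrightarrow> is_suffix w x"
  by (auto simp: is_suffix_def)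

lemma is_suffix_set: "is_suffix w x \<Longrightarrow> set w \<subseteq> set x"
  by (auto simp: is_suffix_def)

lemma idx_nonzero: "k \<in> idx inst \<Longrightarrow> k \<noteq> 0"
  by (auto simp: idx_def)

lemma cW_in_Wset_iff:
  "cW w k \<in> Wset inst \<longleftrightarrow>
   (k \<in> idx inst \<and> (is_suffix w (uw inst k) \<or> is_suffix w (vw inst k))) \<or>
   (k = 0 \<and> (\<exists>j\<in>idx inst. is_suffix w (uw inst j) \<or> is_suffix w (vw inst j)))"
  by (auto simp: Wset_def idx_nonzero)

lemma cW_append_Wset: "cW (p @ w) k \<in> Wset inst \<Longrightarrow> cW w k \<in> Wset inst"
  by (auto simp: cW_in_Wset_iff dest: is_suffix_append)

lemma cW_Cons_Wset: "cW (a # w) k \<in> Wset inst \<Longrightarrow> cW w k \<in> Wset inst"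
  using cW_append_Wset[of "[a]"] by simp

lemma cW_0_Wset: "cW w k \<in> Wset inst \<Longrightarrow> cW w 0 \<in> Wset inst"
  by (auto simp: cW_in_Wset_iff)

lemma cW_uw_Wset: "k \<in> idx inst \<Longrightarrow> cW (uw inst k) k \<in> Wset inst"
  by (simp add: cW_in_Wset_iff is_suffix_refl)

lemma cW_vw_Wset: "k \<in> idx inst \<Longrightarrow> cW (vw inst k) k \<in> Wset inst"
  by (simp add: cW_in_Wset_iff is_suffix_refl)

lemma cU_in_Uset [simp]: "cU k \<in> Uset inst \<longleftrightarrow> k \<in> idx inst"
  by (auto simp: Uset_def)

lemma cV_in_Vset [simp]: "cV k \<in> Vset inst \<longleftrightarrow> k \<in> idx inst"
  by (auto simp: Vset_def)

lemma Uset_cU: "c \<in> Uset inst \<Longrightarrow> \<exists>k. c = cU k \<and> k \<in> idx inst"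
  by (auto simp: Uset_def)

lemma Vset_cV: "c \<in> Vset inst \<Longrightarrow> \<exists>k. c = cV k \<and> k \<in> idx inst"
  by (auto simp: Vset_def)

lemma not_in_Uset [simp]:
  "cX \<notin> Uset inst" "cY \<notin> Uset inst" "cZ \<notin> Uset inst" "cI \<notin> Uset inst" "cS \<notin> Uset inst"
  "cC \<notin> Uset inst" "cC' \<notin> Uset inst" "cD \<notin> Uset inst" "cG \<notin> Uset inst" "cG' \<notin> Uset inst"
  "cGu \<notin> Uset inst" "cGv \<notin> Uset inst" "cGv' \<notin> Uset inst" "cV k \<notin> Uset inst" "cW w k \<notin> Uset inst"
  by (auto simp: Uset_def)

lemma not_in_Vset [simp]:
  "cX \<notin> Vset inst" "cY \<notin> Vset inst" "cZ \<notin> Vset inst" "cI \<notin> Vset inst" "cS \<notin> Vset inst"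
  "cC \<notin> Vset inst" "cC' \<notin> Vset inst" "cD \<notin> Vset inst" "cG \<notin> Vset inst" "cG' \<notin> Vset inst"
  "cGu \<notin> Vset inst" "cGv \<notin> Vset inst" "cGv' \<notin> Vset inst" "cU k \<notin> Vset inst" "cW w k \<notin> Vset inst"
  by (auto simp: Vset_def)

lemma not_in_Wset [simp]:
  "cX \<notin> Wset inst" "cY \<notin> Wset inst" "cZ \<notin> Wset inst" "cI \<notin> Wset inst" "cS \<notin> Wset inst"
  "cC \<notin> Wset inst" "cC' \<notin> Wset inst" "cD \<notin> Wset inst" "cG \<notin> Wset inst" "cG' \<notin> Wset inst"
  "cGu \<notin> Wset inst" "cGv \<notin> Wset inst" "cGv' \<notin> Wset inst" "cU k \<notin> Wset inst" "cV k \<notin> Wset inst"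
  by (auto simp: Wset_def)

locale pcp_instance =
  fixes Sig :: "'a set" and inst :: "('a list \<times> 'a list) list"
  assumes pairs_wf: "\<forall>(u, v) \<in> set inst. u \<noteq> [] \<and> v \<noteq> [] \<and> set u \<subseteq> Sig \<and> set v \<subseteq> Sig"
begin

lemma cW_Wset_alphabet:
  assumes "cW w k \<in> Wset inst"
  shows "set w \<subseteq> Sig"
proof -
  obtain j where j: "j \<in> idx inst" "is_suffix w (uw inst j) \<or> is_suffix w (vw inst j)"
    using assms by (auto simp: cW_in_Wset_iff)
  then have "(uw inst j, vw inst j) \<in> set inst" by (auto simp: idx_def uw_def vw_def)
  then have "set (uw inst j) \<subseteq> Sig" "set (vw inst j) \<subseteq> Sig"
    using pairs_wf by fastforce+
  then show ?thesis using j(2) is_suffix_set by blast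
qed

lemma cW_strip: "cW (p @ w) k \<in> Wset inst \<Longrightarrow> chain_reach Sig inst [cW (p @ w) k] [cW w k]"
proof (induction p)
  case (Cons a p)
  have a: "a \<in> Sig" using cW_Wset_alphabet[OF Cons.prems] by simp
  have "k = 0 \<or> k \<in> idx inst" using Cons.prems by (auto simp: cW_in_Wset_iff)
  then have "rule Sig inst (cW (a # p @ w) k) Tau (Cst (cW (p @ w) k))"
    using Cons.prems a by (auto intro: r39 r40)
  then have "chain_step Sig inst [cW ((a # p) @ w) k] [cW (p @ w) k]"
    using chain_step_rule_Cst by fastforce
  moreover have "cW (p @ w) k \<in> Wset inst"
    using cW_Cons_Wset Cons.prems by simp
  ultimately show ?case using Cons.IH by (meson converse_rtranclp_into_rtranclp)
qed simp

lemma cW_forget_index: "cW w k \<in> Wset inst \<Longrightarrow> chain_reach Sig inst [cW w k] [cW w 0]"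
  by (cases "k = 0")
     (auto intro!: r_into_rtranclp chain_step_rule_Cst r41 simp: cW_in_Wset_iff)

lemma W_vanishes:
  assumes "W \<in> Wset inst"
  shows "chain_reach Sig inst [W] []"
proof -
  obtain w k where W: "W = cW w k" using Wset_cW[OF assms] by blast
  have "cW ([] @ w) 0 \<in> Wset inst" using cW_0_Wset assms W by simp
  then have "chain_reach Sig inst [cW w 0] [cW [] 0]" "cW [] 0 \<in> Wset inst"
    using cW_strip[of w "[]" 0] cW_append_Wset[of w "[]" 0] by simp_all
  then have "chain_reach Sig inst [cW w 0] []"
    by (meson chain_step_rule_Eps r42 rtranclp.rtrancl_into_rtrancl)
  then show ?thesis using cW_forget_index assms W by (meson rtranclp_trans)
qed

lemma W_from_UV:
  assumes "W \<in> Wset inst"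
  shows "\<exists>y \<in> Uset inst \<union> Vset inst. chain_reach Sig inst [y] [W]"
proof -
  obtain w k where W: "W = cW w k" using Wset_cW[OF assms] by blast
  obtain j y x where j: "j \<in> idx inst" "y \<in> Uset inst \<union> Vset inst" "x = uw inst j \<or> x = vw inst j"
    "rule Sig inst y Tau (Cst (cW x j))" "is_suffix w x" "k = j \<or> k = 0"
    using assms unfolding W cW_in_Wset_iff by (metis Un_iff cU_in_Uset cV_in_Vset r34 r35)
  obtain p where p: "x = p @ w" using j(5) by (auto simp: is_suffix_def)
  have xW: "cW (p @ w) j \<in> Wset inst" using j(1,3) p cW_uw_Wset cW_vw_Wset by metis
  have "chain_reach Sig inst [y] [cW w j]"
    using chain_step_rule_Cst[OF j(4), of "[]"] cW_strip[OF xW] p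
    by (simp add: converse_rtranclp_into_rtranclp)
  moreover have "chain_reach Sig inst [cW w j] [cW w k]"
    using j(6) cW_forget_index[OF cW_append_Wset[OF xW]] by auto
  ultimately show ?thesis using j(2) W by (meson rtranclp_trans)
qed

end

section \<open>Vanishing and generated chains\<close>

definition vanishing :: "('a list \<times> 'a list) list \<Rightarrow> 'a const \<Rightarrow> bool" where
  "vanishing inst c \<longleftrightarrow> c \<in> {cGu, cGv', cGv, cZ, cG, cG'} \<or> c \<in> Uset inst \<union> Vset inst \<union> Wset inst"

lemma vanishing_not_ctrl: "vanishing inst c \<Longrightarrow> \<not> ctrl_const c"
  by (auto simp: vanishing_def ctrl_const_def dest!: Uset_cU Vset_cV Wset_cW)

lemma vanishing_chain_ctrl_final: "\<forall>c\<in>set x. vanishing inst c \<Longrightarrow> ctrl_final (chain_mset x)"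
  by (auto simp: chain_mset_def dest: in_set_butlastD vanishing_not_ctrl)

fun VU_chain :: "('a list \<times> 'a list) list \<Rightarrow> 'a const list \<Rightarrow> bool" where
  "VU_chain inst [] = True"
| "VU_chain inst (c # xs) \<longleftrightarrow>
     (c \<in> Vset inst \<and> VU_chain inst xs) \<or> (c \<in> Uset inst \<and> xs \<in> lists (Uset inst))"

lemma VU_chain_lists: "VU_chain inst xs \<Longrightarrow> xs \<in> lists (Uset inst \<union> Vset inst)"
  by (induction xs) auto

lemma lists_Uset_VU_chain: "us \<in> lists (Uset inst) \<Longrightarrow> VU_chain inst us"
  by (induction us) auto

lemma VU_chain_append: "vs \<in> lists (Vset inst) \<Longrightarrow> us \<in> lists (Uset inst) \<Longrightarrow> VU_chain inst (vs @ us)"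
  by (induction vs) (auto simp: lists_Uset_VU_chain)

lemma VU_chain_split:
  "VU_chain inst xs \<Longrightarrow> \<exists>vs us. vs \<in> lists (Vset inst) \<and> us \<in> lists (Uset inst) \<and> xs = vs @ us"
proof (induction xs)
  case (Cons c xs)
  show ?case
  proof (cases "c \<in> Vset inst")
    case True
    then have "VU_chain inst xs" using Cons.prems by (auto dest: Vset_cV)
    then obtain vs us where "vs \<in> lists (Vset inst)" "us \<in> lists (Uset inst)" "xs = vs @ us"
      using Cons.IH by blast
    then show ?thesis using True by (intro exI[of _ "c # vs"] exI[of _ us]) auto
  next
    case False
    then have "c \<in> Uset inst" "xs \<in> lists (Uset inst)" using Cons.prems by auto
    then show ?thesis by (intro exI[of _ "[]"] exI[of _ "c # xs"]) auto
  qed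
qed simp

lemma generator_extends:
  assumes "\<forall>d\<in>S. rule Sig inst c Tau (Seq (Cst c) (Cst d))" and "xs \<in> lists S"
  shows "chain_reach Sig inst (c # ys) (c # xs @ ys)"
  using assms(2)
proof (induction xs)
  case (Cons d xs)
  then have "chain_step Sig inst (c # xs @ ys) (c # d # xs @ ys)"
    using assms(1) chain_step_rule_Seq by fastforce
  with Cons show ?case by (auto intro: rtranclp.rtrancl_into_rtrancl)
qed simp

lemma hub_spawns_chain:
  assumes "rule Sig inst h Tau (Par (Cst h) (Cst g))" and "chain_reach Sig inst [g] x" and "x \<noteq> []"
  shows "nf_reach Sig inst (add_mset [h] M) (add_mset x (add_mset [h] M))"
proof -
  have "nf_step Sig inst (add_mset [h] M) Tau (add_mset [h] M + chain_mset [g])"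
    using nf_step_rule_singleton[OF assms(1), of "{#[h], [g]#}" M] by (simp add: add_ac)
  moreover have "nf_reach Sig inst (add_mset [h] M + chain_mset [g]) (add_mset [h] M + chain_mset x)"
    using chain_reach_nf_reach[OF assms(2)] by blast
  ultimately show ?thesis using assms(3) by (simp add: chain_mset_def converse_rtranclp_into_rtranclp)
qed

lemma hub_spawns:
  assumes "rule Sig inst h Tau (Par (Cst h) (Cst g))"
    and "\<forall>x\<in>#R. x \<noteq> [] \<and> chain_reach Sig inst [g] x"
  shows "nf_reach Sig inst (add_mset [h] M) (add_mset [h] (M + R))"
  using assms(2)
proof (induction R)
  case (add x R)
  then have "nf_reach Sig inst (add_mset [h] (M + R)) (add_mset x (add_mset [h] (M + R)))"
    using hub_spawns_chain[OF assms(1)] by simp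
  with add show ?case by (simp add: add_mset_commute rtranclp_trans)
qed simp

context pcp_instance
begin

lemma vanishing_vanishes:
  assumes "vanishing inst c"
  shows "chain_reach Sig inst [c] []"
proof -
  have via: "chain_reach Sig inst [c] []"
    if "rule Sig inst c Tau (Cst d)" and "chain_reach Sig inst [d] []" for c d
    using chain_step_rule_Cst[OF that(1), of "[]"] that(2) by (rule converse_rtranclp_into_rtranclp)
  have eps: "chain_reach Sig inst [c] []" if "rule Sig inst c Tau Eps" for c
    using chain_step_rule_Eps[OF that, of "[]"] by blast
  have Z: "chain_reach Sig inst [cZ] []" by (rule eps[OF r14])
  have Gv': "chain_reach Sig inst [cGv'] []" by (rule via[OF r10 Z])
  have UV: "chain_reach Sig inst [c] []" if "c \<in> Uset inst \<union> Vset inst" for c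
  proof -
    from that consider k where "k \<in> idx inst" "c = cU k" | k where "k \<in> idx inst" "c = cV k"
      by (auto dest!: Uset_cU Vset_cV)
    then show ?thesis
      by cases (auto intro: via[OF r34 W_vanishes[OF cW_uw_Wset]] via[OF r35 W_vanishes[OF cW_vw_Wset]])
  qed
  show ?thesis
  proof (cases "c \<in> Wset inst \<or> c \<in> Uset inst \<union> Vset inst")
    case True
    then show ?thesis using UV W_vanishes by blast
  next
    case False
    then have "c \<in> {cGu, cGv', cGv, cZ, cG, cG'}" using assms by (auto simp: vanishing_def)
    then show ?thesis using Z Gv' via[OF r8 Gv'] eps[OF r12] eps[OF r22] via[OF r33 Z] by auto
  qed
qed

lemma vanishing_chain_vanishes: "\<forall>c\<in>set xs. vanishing inst c \<Longrightarrow> chain_reach Sig inst xs []"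
proof (induction xs)
  case (Cons c xs)
  then have "chain_reach Sig inst ([c] @ xs) ([] @ xs)"
    by (intro chain_reach_append vanishing_vanishes) simp
  moreover have "chain_reach Sig inst xs []" using Cons by simp
  ultimately show ?case by (metis append_Cons append_Nil rtranclp_trans)
qed simp

lemma vanishing_chains_vanish:
  assumes "\<forall>x\<in>#R. x \<noteq> [] \<and> (\<forall>c\<in>set x. vanishing inst c)"
  shows "nf_reach Sig inst (M + R) M"
  using assms
proof (induction R)
  case (add x R)
  then have "nf_reach Sig inst ((M + R) + chain_mset x) ((M + R) + chain_mset [])"
    by (intro chain_reach_nf_reach vanishing_chain_vanishes) simp
  then have "nf_reach Sig inst (M + add_mset x R) (M + R)"
    using add.prems by (simp add: chain_mset_def)
  moreover have "nf_reach Sig inst (M + R) M" using add by simp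
  ultimately show ?case by (rule rtranclp_trans)
qed simp

lemma Gu_generates: "us \<in> lists (Uset inst) \<Longrightarrow> chain_reach Sig inst [cGu] (cGu # us)"
  using generator_extends[of "Uset inst" Sig inst cGu us "[]"] by (auto dest!: Uset_cU intro: r6)

lemma Gu_reaches_VU_chain:
  assumes "VU_chain inst xs"
  shows "chain_reach Sig inst [cGu] (cGv' # xs)" and "chain_reach Sig inst [cGu] (cZ # xs)"
    and "xs \<noteq> [] \<Longrightarrow> chain_reach Sig inst [cGu] xs"
proof -
  obtain vs us where vs: "vs \<in> lists (Vset inst)" and us: "us \<in> lists (Uset inst)" and "xs = vs @ us"
    using VU_chain_split[OF assms] by blast
  moreover have "chain_reach Sig inst (cGv' # us) (cGv' # vs @ us)"
    using generator_extends[of "Vset inst" Sig inst cGv' vs us] vs by (auto dest!: Vset_cV intro: r9)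
  ultimately show Gv': "chain_reach Sig inst [cGu] (cGv' # xs)"
    using Gu_generates[OF us] chain_step_rule_Cst[OF r8, where xs=us]
    by (meson rtranclp.rtrancl_into_rtrancl rtranclp_trans)
  then show Z: "chain_reach Sig inst [cGu] (cZ # xs)"
    using chain_step_rule_Cst[OF r10] by (blast intro: rtranclp.rtrancl_into_rtrancl)
  then show "chain_reach Sig inst [cGu] xs"
    using chain_step_rule_Eps[OF r14] by (blast intro: rtranclp.rtrancl_into_rtrancl)
qed

lemma Gu_reaches_W:
  assumes "W \<in> Wset inst"
  shows "chain_reach Sig inst [cGu] [W]"
proof -
  obtain y where "y \<in> Uset inst \<union> Vset inst" and yW: "chain_reach Sig inst [y] [W]"
    using W_from_UV[OF assms] by blast
  then have "chain_reach Sig inst [cGu] [y]" using Gu_reaches_VU_chain(3)[of "[y]"] by auto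
  then show ?thesis using yW by (rule rtranclp_trans)
qed

lemma G_reaches:
  assumes "ps \<in> lists (Uset inst \<union> Vset inst)"
  shows "chain_reach Sig inst [cG] (cG # ps)" and "chain_reach Sig inst [cG] ps"
    and "W \<in> Wset inst \<Longrightarrow> chain_reach Sig inst [cG] (W # ps)"
proof -
  have gen: "chain_reach Sig inst [cG] (cG # qs)" if "qs \<in> lists (Uset inst \<union> Vset inst)" for qs
    using generator_extends[of "Uset inst \<union> Vset inst" Sig inst cG qs "[]"] that
    by (auto dest!: Uset_cU Vset_cV intro: r20 r21)
  have drop: "chain_reach Sig inst [cG] qs" if "qs \<in> lists (Uset inst \<union> Vset inst)" for qs
    using gen[OF that] chain_step_rule_Eps[OF r22] by (blast intro: rtranclp.rtrancl_into_rtrancl)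
  show "chain_reach Sig inst [cG] (cG # ps)" "chain_reach Sig inst [cG] ps"
    using gen drop assms by blast+
  assume "W \<in> Wset inst"
  then obtain y where y: "y \<in> Uset inst \<union> Vset inst" "chain_reach Sig inst [y] [W]"
    using W_from_UV by blast
  then have "chain_reach Sig inst ([y] @ ps) ([W] @ ps)" by (blast intro: chain_reach_append)
  then show "chain_reach Sig inst [cG] (W # ps)"
    using drop[of "y # ps"] assms y(1) by (simp add: rtranclp_trans)
qed

lemma Gv_generates: "vs \<in> lists (Vset inst) \<Longrightarrow> chain_reach Sig inst [cGv] (cGv # vs)"
  using generator_extends[of "Vset inst" Sig inst cGv vs "[]"] by (auto dest!: Vset_cV intro: r11)

lemma G'_reaches:
  assumes "qs \<in> lists (Uset inst \<union> Vset inst \<union> Wset inst)"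
  shows "chain_reach Sig inst [cG'] (cG' # qs)" and "chain_reach Sig inst [cG'] (cGv # qs)"
    and "chain_reach Sig inst [cG'] (cZ # qs)" and "chain_reach Sig inst [cG'] qs"
proof -
  show G': "chain_reach Sig inst [cG'] (cG' # qs)"
    using generator_extends[of "Uset inst \<union> Vset inst \<union> Wset inst" Sig inst cG' qs "[]"] assms
    by (auto dest!: Uset_cU Vset_cV intro: r29 r30 r31)
  show "chain_reach Sig inst [cG'] (cGv # qs)"
    using G' chain_step_rule_Cst[OF r32] by (blast intro: rtranclp.rtrancl_into_rtrancl)
  show Z: "chain_reach Sig inst [cG'] (cZ # qs)"
    using G' chain_step_rule_Cst[OF r33] by (blast intro: rtranclp.rtrancl_into_rtrancl)
  show "chain_reach Sig inst [cG'] qs"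
    using Z chain_step_rule_Eps[OF r14] by (blast intro: rtranclp.rtrancl_into_rtrancl)
qed

end

section \<open>Configurations of \<open>D\<close>\<close>

text \<open>The chains spawned by \<open>D\<close>: \<open>G\<^sub>u\<P>\<^sub>u\<close>, \<open>G\<^sub>v'\<P>\<^sub>v\<P>\<^sub>u\<close>, \<open>Z\<P>\<^sub>v\<P>\<^sub>u\<close>,
  \<open>W\<P>\<^sub>v\<P>\<^sub>u\<close> and nonempty \<open>\<P>\<^sub>v\<P>\<^sub>u\<close>. This over-approximates the reachable chains (a \<open>W\<close>
  coming from some \<open>U\<^sub>k\<close> is never followed by a \<open>V\<^sub>j\<close>) but is closed under transitions.\<close>

fun D_spawned :: "('a list \<times> 'a list) list \<Rightarrow> 'a const list \<Rightarrow> bool" where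
  "D_spawned inst [] = False"
| "D_spawned inst (c # xs) =
     (if c = cGu then xs \<in> lists (Uset inst)
      else if c = cGv' \<or> c = cZ \<or> c \<in> Wset inst then VU_chain inst xs
      else VU_chain inst (c # xs))"

lemma VU_chain_D_spawned: "VU_chain inst xs \<Longrightarrow> xs \<noteq> [] \<Longrightarrow> D_spawned inst xs"
  by (cases xs) (auto dest!: Uset_cU Vset_cV)

lemma D_spawned_vanishing: "D_spawned inst x \<Longrightarrow> x \<noteq> [] \<and> (\<forall>c\<in>set x. vanishing inst c)"
  by (cases x) (auto simp: vanishing_def split: if_splits dest!: VU_chain_lists)

lemma D_spawned_ctrl_final: "\<forall>x\<in>#R. D_spawned inst x \<Longrightarrow> ctrl_final R"
  using D_spawned_vanishing vanishing_chain_ctrl_final by (fastforce simp: ctrl_final_def chain_mset_def)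

lemma D_spawned_tau_successor:
  "rule Sig inst c Tau R \<Longrightarrow> D_spawned inst (c # xs) \<Longrightarrow>
   \<exists>r. nf R = Some (chain_mset r) \<and> (r @ xs \<noteq> [] \<longrightarrow> D_spawned inst (r @ xs))"
  by (erule rule.cases)
     (auto simp: lists_Uset_VU_chain cW_uw_Wset cW_vw_Wset VU_chain_D_spawned
       intro: cW_Cons_Wset cW_0_Wset)

lemma D_spawned_visible_step:
  "rule Sig inst c l R \<Longrightarrow> l \<noteq> Tau \<Longrightarrow> D_spawned inst (c # xs) \<Longrightarrow>
   c \<in> {cGu, cGv', cZ} \<or> (c \<in> Wset inst \<and> VU_chain inst xs \<and> (\<exists>W. W \<in> Wset inst \<and> R = Cst W))"
  by (erule rule.cases) (auto intro: cW_Cons_Wset cW_0_Wset)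

context pcp_instance
begin

lemma D_spawned_from_Gu:
  assumes "D_spawned inst x" and "hd x \<in> {cGu, cGv', cZ}"
  shows "chain_reach Sig inst [cGu] x"
  using assms Gu_generates Gu_reaches_VU_chain(1,2) by (cases x) auto

lemma D_spawned_from_G:
  assumes "D_spawned inst x" and "hd x \<notin> {cGu, cGv', cZ}"
  shows "chain_reach Sig inst [cG] x"
proof (cases x)
  case (Cons c xs)
  then show ?thesis
    using assms G_reaches(2,3)[OF VU_chain_lists] by (cases "c \<in> Wset inst") auto
qed (use assms in simp)

end

definition D_config ::
  "('a list \<times> 'a list) list \<Rightarrow> 'a const list multiset \<Rightarrow> 'a const list multiset \<Rightarrow> bool"
where
  "D_config inst H M \<longleftrightarrow> (\<exists>R. M = add_mset [cD] (H + R) \<and> (\<forall>x\<in>#R. D_spawned inst x))"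

definition nf_bisim ::
  "'a set \<Rightarrow> ('a list \<times> 'a list) list \<Rightarrow> 'a const list multiset \<Rightarrow> 'a const list multiset \<Rightarrow> bool"
where
  "nf_bisim Sig inst M N \<longleftrightarrow> ctrl_final M \<and> ctrl_final N \<and>
     ((nf_reach Sig inst M N \<and> nf_reach Sig inst N M) \<or> (\<exists>H. D_config inst H M \<and> D_config inst H N))"

lemma nf_bisim_sym: "nf_bisim Sig inst M N \<Longrightarrow> nf_bisim Sig inst N M"
  by (auto simp: nf_bisim_def)

lemma nf_bisim_ctrl_final: "nf_bisim Sig inst M N \<Longrightarrow> ctrl_final M"
  by (simp add: nf_bisim_def)

lemma nf_bisim_refl: "ctrl_final M \<Longrightarrow> nf_bisim Sig inst M M"
  by (simp add: nf_bisim_def)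

lemma nf_bisim_D_configI:
  assumes "ctrl_final H" and "\<forall>x\<in>#R. D_spawned inst x" and "\<forall>x\<in>#R'. D_spawned inst x"
  shows "nf_bisim Sig inst (add_mset [cD] (H + R)) (add_mset [cD] (H + R'))"
  using assms D_spawned_ctrl_final unfolding nf_bisim_def D_config_def by auto

lemma nf_match_mutual_reach:
  assumes "nf_reach Sig inst N M" and "ctrl_final M" and "nf_step Sig inst M l M'" and "ctrl_final M'"
  shows "nf_match Sig inst (nf_bisim Sig inst) M N l M'"
  using assms nf_bisim_refl unfolding nf_match_def by blast

context pcp_instance
begin

text \<open>\<open>D\<close> first spawns the chains of \<open>R\<close> that \<open>C\<close> could not regenerate, the chains of \<open>R'\<close>
  vanish, and then \<open>D\<close> becomes \<open>C\<close>; the remaining chains of \<open>R\<close> are spawned by \<open>C\<close> and vanish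
  again, so the two resulting configurations reach each other silently.\<close>

lemma D_config_match_LD:
  assumes R: "\<forall>x\<in>#R. D_spawned inst x" and R': "\<forall>x\<in>#R'. D_spawned inst x" and H: "ctrl_final H"
  shows "nf_match Sig inst (nf_bisim Sig inst)
           (add_mset [cD] (H + R)) (add_mset [cD] (H + R')) LD (add_mset [cC] (H + R))"
proof -
  define by_Gu where "by_Gu = (\<lambda>x::'a const list. hd x \<in> {cGu, cGv', cZ})"
  define R1 where "R1 = filter_mset by_Gu R"
  define R2 where "R2 = filter_mset (\<lambda>x. \<not> by_Gu x) R"
  have R12: "R = R1 + R2" unfolding R1_def R2_def by simp
  have R1_spawned: "\<forall>x\<in>#R1. D_spawned inst x \<and> by_Gu x"
    and R2_spawned: "\<forall>x\<in>#R2. D_spawned inst x \<and> \<not> by_Gu x"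
    using R unfolding R1_def R2_def by auto
  have ctrl: "ctrl_final R" "ctrl_final R1" "ctrl_final R2" "ctrl_final R'"
    using R R1_spawned R2_spawned R' D_spawned_ctrl_final by (metis (no_types, lifting))+
  have vanish: "\<forall>x\<in>#S. x \<noteq> [] \<and> (\<forall>c\<in>set x. vanishing inst c)"
    if "\<forall>x\<in>#S. D_spawned inst x" for S
    using that D_spawned_vanishing by blast
  have "\<forall>x\<in>#R1. x \<noteq> [] \<and> chain_reach Sig inst [cGu] x"
    using R1_spawned D_spawned_from_Gu D_spawned_vanishing unfolding by_Gu_def by blast
  then have "nf_reach Sig inst (add_mset [cD] (H + R')) (add_mset [cD] (H + R' + R1))"
    by (rule hub_spawns[OF r4])
  moreover have "nf_reach Sig inst (add_mset [cD] (H + R1) + R') (add_mset [cD] (H + R1))"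
    using vanish[OF R'] by (rule vanishing_chains_vanish)
  ultimately have reach: "nf_reach Sig inst (add_mset [cD] (H + R')) (add_mset [cD] (H + R1))"
    by (simp add: add_ac)
  have step: "nf_step Sig inst (add_mset [cD] (H + R1)) LD (add_mset [cC] (H + R1))"
    using nf_step_rule_singleton[OF r5, where Y="{#[cC]#}" and M="H + R1"] by simp
  have "\<forall>x\<in>#R2. x \<noteq> [] \<and> chain_reach Sig inst [cG] x"
    using R2_spawned D_spawned_from_G D_spawned_vanishing unfolding by_Gu_def by blast
  then have "nf_reach Sig inst (add_mset [cC] (H + R1)) (add_mset [cC] (H + R1 + R2))"
    by (rule hub_spawns[OF r18])
  moreover have "nf_reach Sig inst (add_mset [cC] (H + R1) + R2) (add_mset [cC] (H + R1))"
    using vanish[of R2] R2_spawned by (intro vanishing_chains_vanish) blast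
  ultimately have "nf_bisim Sig inst (add_mset [cC] (H + R)) (add_mset [cC] (H + R1))"
    using H ctrl unfolding nf_bisim_def R12 by (simp add: add_ac)
  moreover have "nf_bisim Sig inst (add_mset [cD] (H + R)) (add_mset [cD] (H + R1))"
    using R R1_spawned by (intro nf_bisim_D_configI[OF H]) auto
  ultimately show ?thesis using reach step unfolding nf_match_def by blast
qed

text \<open>A visible step of a spawned chain is matched by first spawning a copy of it (for a
  \<open>W\<close>-headed chain, a copy of its head only).\<close>

lemma D_config_match_visible:
  assumes R: "\<forall>x\<in>#R. D_spawned inst x" and R': "\<forall>x\<in>#R'. D_spawned inst x" and H: "ctrl_final H"
    and x: "D_spawned inst (c # xs)" and rule: "rule Sig inst c l Rc" and "l \<noteq> Tau"
    and Y: "nf_seq (nf Rc) (Some (chain_mset xs)) = Some Y" and "ctrl_final Y"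
  shows "nf_match Sig inst (nf_bisim Sig inst)
           (add_mset [cD] (H + add_mset (c # xs) R)) (add_mset [cD] (H + R')) l (add_mset [cD] (H + R + Y))"
    (is "nf_match _ _ _ ?M ?N _ ?M'")
proof -
  have M_N'': "nf_bisim Sig inst ?M (add_mset [cD] (H + add_mset y R'))" if "D_spawned inst y" for y
    using R R' x that by (intro nf_bisim_D_configI[OF H]) auto
  consider "c \<in> {cGu, cGv', cZ}" | W where "c \<in> Wset inst" "VU_chain inst xs" "W \<in> Wset inst" "Rc = Cst W"
    using D_spawned_visible_step[OF rule \<open>l \<noteq> Tau\<close> x] by blast
  then show ?thesis
  proof cases
    case 1
    have "nf_reach Sig inst ?N (add_mset [cD] (H + add_mset (c # xs) R'))"
      using hub_spawns_chain[OF r4 D_spawned_from_Gu[OF x]] 1 by (simp add: add_mset_commute)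
    moreover have "nf_step Sig inst (add_mset [cD] (H + add_mset (c # xs) R')) l (add_mset [cD] (H + Y + R'))"
      using nf_step_rule[OF rule Y, of "add_mset [cD] (H + R')"]
      by (simp add: add_ac add_mset_commute[of "c # xs" "[cD]"])
    moreover have "nf_bisim Sig inst ?M' (add_mset [cD] (H + Y + R'))"
    proof -
      have "nf_bisim Sig inst (add_mset [cD] (H + Y + R)) (add_mset [cD] (H + Y + R'))"
        using H \<open>ctrl_final Y\<close> by (intro nf_bisim_D_configI R R') simp
      moreover have "H + Y + R = H + R + Y" by (simp add: add_ac)
      ultimately show ?thesis by metis
    qed
    ultimately show ?thesis using M_N''[OF x] unfolding nf_match_def by blast
  next
    case (2 W)
    have "nf_reach Sig inst ?N (add_mset [cD] (H + add_mset [c] R'))"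
      using hub_spawns_chain[OF r4 Gu_reaches_W[OF \<open>c \<in> Wset inst\<close>]] by (simp add: add_mset_commute)
    moreover have "nf_step Sig inst (add_mset [cD] (H + add_mset [c] R')) l (add_mset [cD] (H + add_mset [W] R'))"
      using nf_step_rule_singleton[OF rule[unfolded 2(4)], of "{#[W]#}" "add_mset [cD] (H + R')"]
      by (simp add: add_mset_commute[of "[c]" "[cD]"] add_mset_commute[of "[W]" "[cD]"])
    moreover have "nf_bisim Sig inst (add_mset [cD] (H + add_mset (W # xs) R)) (add_mset [cD] (H + add_mset [W] R'))"
      using 2 R R' by (intro nf_bisim_D_configI[OF H]) auto
    moreover have "?M' = add_mset [cD] (H + add_mset (W # xs) R)" using Y 2 by simp
    moreover have "D_spawned inst [c]" using 2 by simp
    ultimately show ?thesis using M_N'' unfolding nf_match_def by metis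
  qed
qed

end

lemma add_mset_eq_add_mset_union_cases:
  assumes "add_mset a (H + R) = add_mset b M"
  obtains "b = a" "M = H + R"
    | H0 where "H = add_mset b H0" "M = add_mset a (H0 + R)"
    | R0 where "R = add_mset b R0" "M = add_mset a (H + R0)"
proof (cases "b = a")
  case True
  then show ?thesis using that(1) assms by simp
next
  case False
  then obtain K where K: "H + R = add_mset b K" "M = add_mset a K"
    using assms by (auto simp: add_eq_conv_ex)
  then have "b \<in># H \<or> b \<in># R" by (metis union_iff union_single_eq_member add_mset_add_single)
  then show ?thesis
  proof
    assume "b \<in># H"
    then obtain H0 where "H = add_mset b H0" by (metis mset_add)
    then show ?thesis using that(2) K by simp
  next
    assume "b \<in># R"
    then obtain R0 where "R = add_mset b R0" by (metis mset_add)
    then show ?thesis using that(3) K by simp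
  qed
qed

context pcp_instance
begin

lemma D_config_match_common:
  assumes R: "\<forall>x\<in>#R. D_spawned inst x" and R': "\<forall>x\<in>#R'. D_spawned inst x"
    and H: "ctrl_final (add_mset (c # xs) H)" and "ctrl_final Y"
    and rule: "rule Sig inst c l Rc" and Y: "nf_seq (nf Rc) (Some (chain_mset xs)) = Some Y"
  shows "nf_match Sig inst (nf_bisim Sig inst) (add_mset [cD] (add_mset (c # xs) H + R))
           (add_mset [cD] (add_mset (c # xs) H + R')) l (add_mset [cD] (H + Y + R))"
proof -
  have "nf_step Sig inst (add_mset [cD] (add_mset (c # xs) H + R')) l (add_mset [cD] (H + Y + R'))"
    using nf_step_rule[OF rule Y, of "add_mset [cD] (H + R')"]
    by (simp add: add_ac add_mset_commute[of "c # xs" "[cD]"])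
  moreover have "nf_bisim Sig inst (add_mset [cD] (H + Y + R)) (add_mset [cD] (H + Y + R'))"
    using H \<open>ctrl_final Y\<close> by (intro nf_bisim_D_configI R R') simp
  moreover have "nf_bisim Sig inst (add_mset [cD] (add_mset (c # xs) H + R))
      (add_mset [cD] (add_mset (c # xs) H + R'))"
    using H by (intro nf_bisim_D_configI R R')
  ultimately show ?thesis unfolding nf_match_def by blast
qed

lemma D_config_match_tau_spawned:
  assumes R: "\<forall>x\<in>#R. D_spawned inst x" and R': "\<forall>x\<in>#R'. D_spawned inst x" and H: "ctrl_final H"
    and x: "D_spawned inst (c # xs)" and rule: "rule Sig inst c Tau Rc"
    and Y: "nf_seq (nf Rc) (Some (chain_mset xs)) = Some Y"
  shows "nf_match Sig inst (nf_bisim Sig inst)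
           (add_mset [cD] (H + add_mset (c # xs) R)) (add_mset [cD] (H + R')) Tau (add_mset [cD] (H + R + Y))"
proof -
  obtain r where "nf Rc = Some (chain_mset r)" and r: "r @ xs \<noteq> [] \<longrightarrow> D_spawned inst (r @ xs)"
    using D_spawned_tau_successor[OF rule x] by blast
  then have "Y = chain_mset (r @ xs)" using Y nf_seq_chain_mset[of r xs] by simp
  then have "\<forall>x\<in>#R + Y. D_spawned inst x" using R r by (auto simp: chain_mset_def)
  then have "nf_bisim Sig inst (add_mset [cD] (H + (R + Y))) (add_mset [cD] (H + R'))"
    by (intro nf_bisim_D_configI H R')
  then show ?thesis by (simp add: nf_match_def add.assoc)
qed

lemma D_config_transfer:
  assumes "D_config inst H M" and "D_config inst H N" and "ctrl_final M" and "ctrl_final N"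
    and step: "nf_step Sig inst M l M'" and "ctrl_final M'"
  shows "nf_match Sig inst (nf_bisim Sig inst) M N l M'"
proof -
  obtain R R' where M: "M = add_mset [cD] (H + R)" and R: "\<forall>x\<in>#R. D_spawned inst x"
    and N: "N = add_mset [cD] (H + R')" and R': "\<forall>x\<in>#R'. D_spawned inst x"
    using assms(1,2) by (auto simp: D_config_def)
  have H: "ctrl_final H" using assms(4) N by simp
  obtain c xs M0 Rc Y where M0: "M = add_mset (c # xs) M0" and rule: "rule Sig inst c l Rc"
    and Y: "nf_seq (nf Rc) (Some (chain_mset xs)) = Some Y" and M': "M' = M0 + Y"
    using nf_step_unfold[OF step] by blast
  have "add_mset [cD] (H + R) = add_mset (c # xs) M0" using M M0 by simp
  then consider "c # xs = [cD]" "M0 = H + R"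
    | H0 where "H = add_mset (c # xs) H0" "M0 = add_mset [cD] (H0 + R)"
    | R0 where "R = add_mset (c # xs) R0" "M0 = add_mset [cD] (H + R0)"
    by (rule add_mset_eq_add_mset_union_cases)
  then show ?thesis
  proof cases
    case 1
    then have "l = Tau \<and> Rc = Par (Cst cD) (Cst cGu) \<or> l = LD \<and> Rc = Cst cC"
      using rule by (auto elim: rule.cases)
    then show ?thesis
    proof
      assume spawn: "l = Tau \<and> Rc = Par (Cst cD) (Cst cGu)"
      then have "M' = add_mset [cD] (H + add_mset [cGu] R)"
        using M' Y 1 by (simp add: chain_mset_def add_mset_commute[of "[cGu]" "[cD]"])
      moreover have "nf_bisim Sig inst (add_mset [cD] (H + add_mset [cGu] R)) N"
        unfolding N using R R' by (intro nf_bisim_D_configI[OF H]) auto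
      ultimately show ?thesis using spawn by (simp add: nf_match_def)
    next
      assume become_C: "l = LD \<and> Rc = Cst cC"
      then have "M' = add_mset [cC] (H + R)"
        using M' Y 1 by (auto simp: chain_mset_def)
      then show ?thesis
        using D_config_match_LD[OF R R' H] become_C M N by simp
    qed
  next
    case (2 H0)
    have "ctrl_final (add_mset (c # xs) H0)" "ctrl_final Y" using H \<open>ctrl_final M'\<close> M' 2 by auto
    then show ?thesis
      using D_config_match_common[OF R R' _ _ rule Y] M M' N 2 by (simp add: add_ac)
  next
    case (3 R0)
    have x: "D_spawned inst (c # xs)" and R0: "\<forall>x\<in>#R0. D_spawned inst x" using R 3 by auto
    have "M = add_mset [cD] (H + add_mset (c # xs) R0)" "M' = add_mset [cD] (H + R0 + Y)"
      using M M' 3 by (simp_all add: add_ac)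
    moreover have "ctrl_final Y" using \<open>ctrl_final M'\<close> M' by simp
    ultimately show ?thesis
      using D_config_match_tau_spawned[OF R0 R' H x _ Y] D_config_match_visible[OF R0 R' H x rule _ Y] rule N
      by (cases "l = Tau") simp_all
  qed
qed

lemma nf_bisim_transfer:
  assumes "nf_bisim Sig inst M N" and "nf_step Sig inst M l M'" and "ctrl_final M'"
  shows "nf_match Sig inst (nf_bisim Sig inst) M N l M'"
  using assms(1)[unfolded nf_bisim_def] nf_match_mutual_reach[OF _ _ assms(2,3)]
    D_config_transfer[OF _ _ _ _ assms(2,3)]
  by blast

lemma bbisimilar_if_nf_bisim:
  "nf P = Some M \<Longrightarrow> nf Q = Some N \<Longrightarrow> nf_bisim Sig inst M N \<Longrightarrow> bbisimilar Sig inst P Q"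
  by (rule bbisimilar_from_nf_relation[where B = "nf_bisim Sig inst",
        OF nf_bisim_sym nf_bisim_ctrl_final nf_bisim_transfer])

end

definition hub_chain :: "'a set \<Rightarrow> ('a list \<times> 'a list) list \<Rightarrow> 'a const \<Rightarrow> 'a const list \<Rightarrow> bool" where
  "hub_chain Sig inst h x \<longleftrightarrow>
     (\<exists>g. rule Sig inst h Tau (Par (Cst h) (Cst g)) \<and> chain_reach Sig inst [g] x) \<and>
     (\<forall>c\<in>set x. vanishing inst c)"

lemma hub_chainI:
  "rule Sig inst h Tau (Par (Cst h) (Cst g)) \<Longrightarrow> chain_reach Sig inst [g] x \<Longrightarrow>
   \<forall>c\<in>set x. vanishing inst c \<Longrightarrow> hub_chain Sig inst h x"
  unfolding hub_chain_def by blast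

context pcp_instance
begin

lemma hub_chain_reach:
  assumes "hub_chain Sig inst h x"
  shows "nf_reach Sig inst {#[h]#} (add_mset [h] (chain_mset x))"
    and "nf_reach Sig inst (add_mset [h] (chain_mset x)) {#[h]#}"
proof -
  obtain g where g: "rule Sig inst h Tau (Par (Cst h) (Cst g))" "chain_reach Sig inst [g] x"
    and vanish: "\<forall>c\<in>set x. vanishing inst c"
    using assms by (auto simp: hub_chain_def)
  show "nf_reach Sig inst {#[h]#} (add_mset [h] (chain_mset x))"
    using hub_spawns_chain[OF g, of "{#}"]
    by (cases "x = []") (simp_all add: chain_mset_def add_mset_commute[of x])
  show "nf_reach Sig inst (add_mset [h] (chain_mset x)) {#[h]#}"
    using chain_reach_nf_reach[OF vanishing_chain_vanishes[OF vanish], of "{#[h]#}"]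
    by (simp add: chain_mset_def)
qed

lemma bbisimilar_hub_chains:
  assumes "hub_chain Sig inst h x" and "hub_chain Sig inst h y"
    and "nf P = Some (add_mset [h] (chain_mset x))" and "nf Q = Some (add_mset [h] (chain_mset y))"
  shows "bbisimilar Sig inst P Q"
proof (rule bbisimilar_if_nf_bisim[OF assms(3,4)])
  have "ctrl_final (add_mset [h] (chain_mset z))" if "hub_chain Sig inst h z" for z
    using that by (auto simp: hub_chain_def intro: vanishing_chain_ctrl_final)
  then show "nf_bisim Sig inst (add_mset [h] (chain_mset x)) (add_mset [h] (chain_mset y))"
    using hub_chain_reach[OF assms(1)] hub_chain_reach[OF assms(2)] assms(1,2)
    unfolding nf_bisim_def by (meson rtranclp_trans)
qed

lemma bbisimilar_D_chains:
  assumes "x = [] \<or> D_spawned inst x" and "y = [] \<or> D_spawned inst y"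
    and "nf P = Some (add_mset [cD] (chain_mset x))" and "nf Q = Some (add_mset [cD] (chain_mset y))"
  shows "bbisimilar Sig inst P Q"
proof (rule bbisimilar_if_nf_bisim[OF assms(3,4)])
  have "\<forall>z\<in>#chain_mset x. D_spawned inst z" "\<forall>z\<in>#chain_mset y. D_spawned inst z"
    using assms(1,2) by (auto simp: chain_mset_def)
  then show "nf_bisim Sig inst (add_mset [cD] (chain_mset x)) (add_mset [cD] (chain_mset y))"
    using nf_bisim_D_configI[where H = "{#}"] by simp
qed

lemma nf_Par_Cst_seqs: "nf (Par (Cst h) (seqs x)) = Some (add_mset [h] (chain_mset x))"
  by (simp add: nf_seqs del: seqs.simps)

lemma nf_Cst_chain_mset_Nil: "nf (Cst h) = Some (add_mset [h] (chain_mset []))"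
  by (simp add: chain_mset_def)

lemma D_bisimilarities:
  assumes Pu: "Pu \<in> lists (Uset inst)" and Pv: "Pv \<in> lists (Vset inst)" and W: "W \<in> Wset inst"
  shows
    "bbisimilar Sig inst (Cst cD) (Par (Cst cD) (Seq (Cst cGu) (seqs Pu))) \<and>
     bbisimilar Sig inst (Par (Cst cD) (Seq (Cst cGu) (seqs Pu)))
                         (Par (Cst cD) (Seq (Cst cGv') (seqs (Pv @ Pu)))) \<and>
     bbisimilar Sig inst (Par (Cst cD) (Seq (Cst cGv') (seqs (Pv @ Pu))))
                         (Par (Cst cD) (Seq (Cst cZ) (seqs (Pv @ Pu)))) \<and>
     bbisimilar Sig inst (Par (Cst cD) (Seq (Cst cZ) (seqs (Pv @ Pu))))
                         (Par (Cst cD) (seqs (Pv @ Pu))) \<and>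
     bbisimilar Sig inst (Par (Cst cD) (seqs (Pv @ Pu)))
                         (Par (Cst cD) (Seq (Cst W) (seqs (Pv @ Pu))))"
proof -
  have "VU_chain inst (Pv @ Pu)" using VU_chain_append[OF Pv Pu] .
  then have spawned: "D_spawned inst (cGu # Pu)" "D_spawned inst (cGv' # Pv @ Pu)"
    "D_spawned inst (cZ # Pv @ Pu)" "Pv @ Pu = [] \<or> D_spawned inst (Pv @ Pu)" "D_spawned inst (W # Pv @ Pu)"
    using Pu W VU_chain_D_spawned by auto
  have D: "bbisimilar Sig inst (Par (Cst cD) (seqs x)) (Par (Cst cD) (seqs y))"
    if "x = [] \<or> D_spawned inst x" "y = [] \<or> D_spawned inst y" for x y
    using bbisimilar_D_chains[OF that nf_Par_Cst_seqs nf_Par_Cst_seqs] .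
  have "bbisimilar Sig inst (Cst cD) (Par (Cst cD) (seqs (cGu # Pu)))"
    using bbisimilar_D_chains[OF _ _ nf_Cst_chain_mset_Nil nf_Par_Cst_seqs] spawned(1) by blast
  then show ?thesis
    using D[of "cGu # Pu" "cGv' # Pv @ Pu"] D[of "cGv' # Pv @ Pu" "cZ # Pv @ Pu"]
      D[of "cZ # Pv @ Pu" "Pv @ Pu"] D[of "Pv @ Pu" "W # Pv @ Pu"] spawned
    by simp
qed

lemma C_bisimilarities:
  assumes P: "P \<in> lists (Uset inst \<union> Vset inst)" and Pv: "Pv \<in> lists (Vset inst)" and W: "W \<in> Wset inst"
  shows
    "bbisimilar Sig inst (Cst cC) (Par (Cst cC) (Seq (Cst cG) (seqs P))) \<and>
     bbisimilar Sig inst (Par (Cst cC) (Seq (Cst cG) (seqs P))) (Par (Cst cC) (seqs P)) \<and>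
     bbisimilar Sig inst (Par (Cst cC) (seqs P)) (Par (Cst cC) (Seq (Cst W) (seqs P))) \<and>
     bbisimilar Sig inst (Par (Cst cC) (Seq (Cst W) (seqs P)))
                         (Par (Cst cC) (Seq (Cst cGv) (seqs Pv)))"
proof -
  have hub: "hub_chain Sig inst cC []" "hub_chain Sig inst cC (cG # P)" "hub_chain Sig inst cC P"
    "hub_chain Sig inst cC (W # P)" "hub_chain Sig inst cC (cGv # Pv)"
    using hub_chainI[OF r18 vanishing_vanishes] hub_chainI[OF r18 G_reaches(1)[OF P]]
      hub_chainI[OF r18 G_reaches(2)[OF P]] hub_chainI[OF r18 G_reaches(3)[OF P W]]
      hub_chainI[OF r19 Gv_generates[OF Pv]] P Pv W
    by (auto simp: vanishing_def)

  show ?thesis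
    using bbisimilar_hub_chains[OF hub(1,2) nf_Cst_chain_mset_Nil nf_Par_Cst_seqs]
      bbisimilar_hub_chains[OF hub(2,3) nf_Par_Cst_seqs nf_Par_Cst_seqs]
      bbisimilar_hub_chains[OF hub(3,4) nf_Par_Cst_seqs nf_Par_Cst_seqs]
      bbisimilar_hub_chains[OF hub(4,5) nf_Par_Cst_seqs nf_Par_Cst_seqs]
    by simp
qed

lemma C'_bisimilarities:
  assumes Q: "Q \<in> lists (Uset inst \<union> Vset inst \<union> Wset inst)"
  shows
    "bbisimilar Sig inst (Cst cC') (Par (Cst cC') (Seq (Cst cG') (seqs Q))) \<and>
     bbisimilar Sig inst (Par (Cst cC') (Seq (Cst cG') (seqs Q)))
                         (Par (Cst cC') (Seq (Cst cGv) (seqs Q))) \<and>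
     bbisimilar Sig inst (Par (Cst cC') (Seq (Cst cGv) (seqs Q)))
                         (Par (Cst cC') (Seq (Cst cZ) (seqs Q))) \<and>
     bbisimilar Sig inst (Par (Cst cC') (Seq (Cst cZ) (seqs Q))) (Par (Cst cC') (seqs Q))"
proof -
  have hub: "hub_chain Sig inst cC' []" "hub_chain Sig inst cC' (cG' # Q)"
    "hub_chain Sig inst cC' (cGv # Q)" "hub_chain Sig inst cC' (cZ # Q)" "hub_chain Sig inst cC' Q"
    using hub_chainI[OF r27 vanishing_vanishes] hub_chainI[OF r27 G'_reaches(1)[OF Q]]
      hub_chainI[OF r27 G'_reaches(2)[OF Q]] hub_chainI[OF r27 G'_reaches(3)[OF Q]]
      hub_chainI[OF r27 G'_reaches(4)[OF Q]] Q
    by (auto simp: vanishing_def)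
  show ?thesis
    using bbisimilar_hub_chains[OF hub(1,2) nf_Cst_chain_mset_Nil nf_Par_Cst_seqs]
      bbisimilar_hub_chains[OF hub(2,3) nf_Par_Cst_seqs nf_Par_Cst_seqs]
      bbisimilar_hub_chains[OF hub(3,4) nf_Par_Cst_seqs nf_Par_Cst_seqs]
      bbisimilar_hub_chains[OF hub(4,5) nf_Par_Cst_seqs nf_Par_Cst_seqs]
    by simp
qed

end

theorem corollary1:
  fixes Sig :: "'a set" and inst :: "('a list \<times> 'a list) list"
    and Pu Pv P Q :: "'a const list" and W :: "'a const"
  assumes "finite Sig" and "card Sig \<ge> 2"
    and "\<forall>(u, v) \<in> set inst. u \<noteq> [] \<and> v \<noteq> [] \<and> set u \<subseteq> Sig \<and> set v \<subseteq> Sig"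
    and "Pu \<in> lists (Uset inst)" and "Pv \<in> lists (Vset inst)"
    and "P \<in> lists (Uset inst \<union> Vset inst)"
    and "Q \<in> lists (Uset inst \<union> Vset inst \<union> Wset inst)"
    and "W \<in> Wset inst"
  shows
    "(bbisimilar Sig inst (Cst cD) (Par (Cst cD) (Seq (Cst cGu) (seqs Pu))) \<and>
     bbisimilar Sig inst (Par (Cst cD) (Seq (Cst cGu) (seqs Pu)))
                         (Par (Cst cD) (Seq (Cst cGv') (seqs (Pv @ Pu)))) \<and>
     bbisimilar Sig inst (Par (Cst cD) (Seq (Cst cGv') (seqs (Pv @ Pu))))
                         (Par (Cst cD) (Seq (Cst cZ) (seqs (Pv @ Pu)))) \<and>
     bbisimilar Sig inst (Par (Cst cD) (Seq (Cst cZ) (seqs (Pv @ Pu))))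
                         (Par (Cst cD) (seqs (Pv @ Pu))) \<and>
     bbisimilar Sig inst (Par (Cst cD) (seqs (Pv @ Pu)))
                         (Par (Cst cD) (Seq (Cst W) (seqs (Pv @ Pu))))) \<and>
    (bbisimilar Sig inst (Cst cC) (Par (Cst cC) (Seq (Cst cG) (seqs P))) \<and>
     bbisimilar Sig inst (Par (Cst cC) (Seq (Cst cG) (seqs P))) (Par (Cst cC) (seqs P)) \<and>
     bbisimilar Sig inst (Par (Cst cC) (seqs P)) (Par (Cst cC) (Seq (Cst W) (seqs P))) \<and>
     bbisimilar Sig inst (Par (Cst cC) (Seq (Cst W) (seqs P)))
                         (Par (Cst cC) (Seq (Cst cGv) (seqs Pv)))) \<and>
    (bbisimilar Sig inst (Cst cC') (Par (Cst cC') (Seq (Cst cG') (seqs Q))) \<and>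
     bbisimilar Sig inst (Par (Cst cC') (Seq (Cst cG') (seqs Q)))
                         (Par (Cst cC') (Seq (Cst cGv) (seqs Q))) \<and>
     bbisimilar Sig inst (Par (Cst cC') (Seq (Cst cGv) (seqs Q)))
                         (Par (Cst cC') (Seq (Cst cZ) (seqs Q))) \<and>
     bbisimilar Sig inst (Par (Cst cC') (Seq (Cst cZ) (seqs Q))) (Par (Cst cC') (seqs Q)))"
proof -
  interpret pcp_instance Sig inst
    using assms(3) by unfold_locales
  show ?thesis
    using D_bisimilarities[OF assms(4,5,8)] C_bisimilarities[OF assms(6,5,8)] C'_bisimilarities[OF assms(7)]
    by blast
qed

end
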